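(* Let $\mu\in\mathbb F_q\setminus\{0\}$. The number of generators (i.e. $(n-1)$-spaces contained in the quadric) of $\mathcal Q_\mu$ that are totally isotropic with respect to $\perp_0$ is exactly $(q^{n+1}+q^n+1)\prod_{i=1}^{n-2}(q^{n-i}+1)$, where an empty product (when $n=2$) equals $1$.
   Context: Let $q$ be an even prime power and $n\ge 2$ an integer. Let $\mathrm{PG}(2n+1,q)$ have homogeneous coordinates $(X_1,\dots,X_{2n+2})$. Fix $\delta\in\mathbb F_q$ such that $X^2+X+\delta$ is irreducible over $\mathbb F_q$. For $\mu\in\mathbb F_q$ let $\mathcal Q_\mu$ be the elliptic quadric $X_1^2+X_1X_{2n+2}+\delta X_{2n+2}^2+\sum_{i=2}^{n+1}X_iX_{2n+3-i}+\mu(X_{2n}^2+X_{2n}X_{2n+1}+\delta X_{2n+1}^2)=0$, whose generators are $(n-1)$-spaces. Let $\perp_0$ be the symplectic polarity defined by the alternating form $B_0(X,Y)=\sum_{i=1}^{2n+2}X_iY_{2n+3-i}$. *)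

theory Defs
  imports "HOL-Library.Function_Algebras" "HOL-Computational_Algebra.Polynomial"
begin

text \<open>Vectors of F_q^(2n+2) are represented as functions nat => 'a whose support
lies in the coordinate range 1..2n+2 (coordinates X_1, ..., X_(2n+2)).\<close>

definition coordspace :: "nat \<Rightarrow> (nat \<Rightarrow> 'a::zero) set" where
  "coordspace N = {x. \<forall>i. i \<notin> {1..N} \<longrightarrow> x i = 0}"

definition vscale :: "'a::field \<Rightarrow> (nat \<Rightarrow> 'a) \<Rightarrow> (nat \<Rightarrow> 'a)" where
  "vscale c x = (\<lambda>i. c * x i)"

definition Qform :: "nat \<Rightarrow> 'a::field \<Rightarrow> 'a \<Rightarrow> (nat \<Rightarrow> 'a) \<Rightarrow> 'a" where
  "Qform n \<delta> \<mu> X =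
     X 1 ^ 2 + X 1 * X (2*n+2) + \<delta> * X (2*n+2) ^ 2
     + (\<Sum>i=2..n+1. X i * X (2*n+3-i))
     + \<mu> * (X (2*n) ^ 2 + X (2*n) * X (2*n+1) + \<delta> * X (2*n+1) ^ 2)"

definition B0 :: "nat \<Rightarrow> (nat \<Rightarrow> 'a::field) \<Rightarrow> (nat \<Rightarrow> 'a) \<Rightarrow> 'a" where
  "B0 n X Y = (\<Sum>i=1..2*n+2. X i * Y (2*n+3-i))"

text \<open>Generators of Q_mu: projective (n-1)-spaces, i.e. n-dimensional vector subspaces
of F_q^(2n+2), all of whose points lie on the quadric.\<close>
definition generators :: "nat \<Rightarrow> 'a::field \<Rightarrow> 'a \<Rightarrow> (nat \<Rightarrow> 'a) set set" where
  "generators n \<delta> \<mu> = {W. W \<subseteq> coordspace (2*n+2) \<and> module.subspace vscale W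
       \<and> vector_space.dim vscale W = n \<and> (\<forall>x\<in>W. Qform n \<delta> \<mu> x = 0)}"

definition totally_isotropic_B0 :: "nat \<Rightarrow> (nat \<Rightarrow> 'a::field) set \<Rightarrow> bool" where
  "totally_isotropic_B0 n W = (\<forall>x\<in>W. \<forall>y\<in>W. B0 n x y = 0)"

end

theory Submission
  imports Defs "HOL-Library.FuncSet" "HOL-Library.Cardinality"
begin

text \<open>
  The polar form of \<open>Q\<^sub>\<mu>\<close> is \<open>B0 + \<mu> Bmu\<close>, where \<open>Bmu\<close> is the polar form of the elliptic
  term in \<open>X\<^sub>2\<^sub>n, X\<^sub>2\<^sub>n\<^sub>+\<^sub>1\<close>. It vanishes on a totally singular subspace, so the generators to be
  counted are the totally singular \<open>n\<close>-spaces that are totally isotropic for \<open>Bmu\<close>. Their number is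
  computed by induction on \<open>n\<close>, simultaneously with the number of those inside
  \<open>X\<^sub>2\<^sub>n = X\<^sub>2\<^sub>n\<^sub>+\<^sub>1 = 0\<close>.

  Going from \<open>n\<close> to \<open>n + 1\<close>, split off the hyperbolic pair \<open>e = e\<^sub>n\<^sub>+\<^sub>2\<close>, \<open>f = e\<^sub>n\<^sub>+\<^sub>3\<close> of
  \<open>Q\<^sub>n\<^sub>+\<^sub>1\<close>; its orthogonal complement carries a copy of \<open>Q\<^sub>n\<close>. Generators through \<open>e\<close> correspond
  to generators \<open>U\<close> of \<open>Q\<^sub>n\<close>. A generator \<open>W\<close> avoiding \<open>e\<close> is determined by the projection \<open>U\<close>
  of \<open>W \<inter> e\<^sup>\<perp>\<close> to the complement and by any \<open>w \<in> W\<close> with \<open>f\<close>-coordinate \<open>1\<close>; for given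
  \<open>U\<close> the admissible \<open>w\<close> are counted directly, and their number only depends on whether \<open>U\<close>
  lies in \<open>X\<^sub>2\<^sub>n = X\<^sub>2\<^sub>n\<^sub>+\<^sub>1 = 0\<close>. Witt's bound (a totally singular subspace has dimension at
  most \<open>n\<close>) guarantees that such \<open>w\<close> exist in \<open>W\<close>. Double counting yields a linear recursion,
  and the case \<open>n = 2\<close> is counted by hand.
\<close>

section \<open>Subspaces of coordinate space over a finite field\<close>

interpretation VS: vector_space "vscale :: 'a::field \<Rightarrow> (nat \<Rightarrow> 'a) \<Rightarrow> (nat \<Rightarrow> 'a)"
  by unfold_locales (auto simp: vscale_def fun_eq_iff algebra_simps)

lemma vscale_apply: "vscale c x i = c * x i"
  by (simp add: vscale_def)

lemma card_UNIV_field_ge_two: "CARD('a::{field,finite}) \<ge> 2"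
proof -
  have "card {0::'a, 1} \<le> CARD('a)" by (rule card_mono) auto
  then show ?thesis by simp
qed

lemma one_add_one_eq_zero_if_even_card:
  assumes "even CARD('a::{field,finite})"
  shows "(1::'a) + 1 = 0"
proof -
  let ?S = "UNIV - {0::'a}"
  have fermat: "x ^ card ?S = 1" if "x \<noteq> 0" for x :: 'a
  proof -
    have inj: "inj_on ((*) x) ?S" using that by (auto simp: inj_on_def)
    have "(*) x ` ?S = ?S"
    proof
      show "(*) x ` ?S \<subseteq> ?S" using that by auto
      show "?S \<subseteq> (*) x ` ?S"
      proof
        fix y assume "y \<in> ?S"
        then have "y = x * (y / x)" "y / x \<in> ?S" using that by auto
        then show "y \<in> (*) x ` ?S" by blast
      qed
    qed
    then have "prod id ?S = prod ((*) x) ?S" using prod.reindex[OF inj] by simp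
    also have "\<dots> = x ^ card ?S * prod id ?S" by (simp add: prod.distrib)
    finally have "prod id ?S * 1 = prod id ?S * x ^ card ?S" by (simp add: mult.commute)
    moreover have "prod id ?S \<noteq> 0" by (simp add: prod_zero_iff)
    ultimately show ?thesis by simp
  qed
  have "odd (card ?S)"
    using assms card_UNIV_field_ge_two[where 'a='a] by (simp add: card_Diff_singleton)
  then have "(-1::'a) = 1" using fermat[of "-1"] by simp
  then show ?thesis by (metis add.right_inverse)
qed

lemma irreducible_quadratic_no_root:
  assumes "irreducible [:\<delta>::'a::field, 1, 1:]"
  shows "x * x + x + \<delta> \<noteq> 0"
proof
  assume "x * x + x + \<delta> = 0"
  then have "poly [:\<delta>, 1, 1:] x = 0" by (simp add: algebra_simps)
  then obtain c where c: "[:\<delta>, 1, 1:] = [:-x, 1:] * c" using poly_eq_0_iff_dvd by (blast elim: dvdE)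
  then have "c \<noteq> 0" by auto
  have "degree [:\<delta>, 1, 1:] = degree [:-x, 1:] + degree c"
    unfolding c using \<open>c \<noteq> 0\<close> by (intro degree_mult_eq) auto
  then have "degree c = 1" by simp
  then have "\<not> is_unit c" "\<not> is_unit [:-x, 1:]" using \<open>c \<noteq> 0\<close> by (simp_all add: is_unit_iff_degree)
  then show False using irreducibleD[OF assms c] by simp
qed

definition supported_on :: "nat set \<Rightarrow> (nat \<Rightarrow> 'a::zero) set" where
  "supported_on T = {x. \<forall>i. i \<notin> T \<longrightarrow> x i = 0}"

lemma
  assumes "finite T"
  shows card_supported_on: "card (supported_on T :: (nat \<Rightarrow> 'a::{zero,finite}) set) = CARD('a) ^ card T"
    and finite_supported_on: "finite (supported_on T :: (nat \<Rightarrow> 'a::{zero,finite}) set)"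
proof -
  have bij: "bij_betw (\<lambda>x. restrict x T) (supported_on T) (PiE T (\<lambda>_. UNIV :: 'a set))"
    by (rule bij_betw_byWitness[where f'="\<lambda>g i. if i \<in> T then g i else 0"])
       (auto simp: supported_on_def fun_eq_iff PiE_def extensional_def)
  show "card (supported_on T :: (nat \<Rightarrow> 'a) set) = CARD('a) ^ card T"
    using bij_betw_same_card[OF bij] assms by (simp add: card_PiE)
  show "finite (supported_on T :: (nat \<Rightarrow> 'a) set)"
    using bij_betw_finite[OF bij] assms by (simp add: finite_PiE)
qed

lemma card_supported_on_nonzero:
  assumes "finite T" "j \<in> T"
  shows "card {w \<in> supported_on T. w j \<noteq> (0::'a::{zero,finite})} = CARD('a) ^ card T - CARD('a) ^ (card T - 1)"
proof -
  have "{w \<in> supported_on T. w j \<noteq> (0::'a)} = supported_on T - supported_on (T - {j})"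
    by (auto simp: supported_on_def)
  moreover have "supported_on (T - {j}) \<subseteq> (supported_on T :: (nat \<Rightarrow> 'a) set)"
    by (auto simp: supported_on_def)
  ultimately show ?thesis using assms
    by (simp add: card_Diff_subset card_supported_on finite_supported_on)
qed

lemma subspace_supported_on: "VS.subspace (supported_on T :: (nat \<Rightarrow> 'a::field) set)"
  unfolding VS.subspace_def supported_on_def by (auto simp: vscale_apply)

lemma coordspace_eq_supported_on: "coordspace N = supported_on {1..N}"
  by (simp add: coordspace_def supported_on_def)

lemma finite_coordspace: "finite (coordspace N :: (nat \<Rightarrow> 'a::{zero,finite}) set)"
  by (simp add: coordspace_eq_supported_on finite_supported_on)

lemma subspace_coordspace: "VS.subspace (coordspace N :: (nat \<Rightarrow> 'a::field) set)"
  by (simp add: coordspace_eq_supported_on subspace_supported_on)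

lemma subspace_coordinate_zero:
  assumes "VS.subspace (W :: (nat \<Rightarrow> 'a::field) set)"
  shows "VS.subspace {x\<in>W. x j = 0}"
  using assms unfolding VS.subspace_def by (auto simp: vscale_apply)

lemma subspace_image_linear:
  assumes "\<And>x y. f (x + y) = f x + f y" "\<And>c x. f (vscale c x) = vscale c (f x)"
    and "VS.subspace S"
  shows "VS.subspace (f ` (S :: (nat \<Rightarrow> 'a::field) set))"
proof -
  have "module_hom vscale vscale f"
    using assms(1,2) by (simp add: module_hom_iff VS.module_axioms)
  then show ?thesis using assms(3) by (rule module_hom.subspace_image)
qed

definition adjoin :: "(nat \<Rightarrow> 'a::field) \<Rightarrow> (nat \<Rightarrow> 'a) set \<Rightarrow> (nat \<Rightarrow> 'a) set" where
  "adjoin x S = (\<lambda>(c, y). vscale c x + y) ` (UNIV \<times> S)"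

lemma mem_adjoin_iff: "z \<in> adjoin x S \<longleftrightarrow> (\<exists>c y. y \<in> S \<and> z = vscale c x + y)"
  by (auto simp: adjoin_def)

lemma span_insert_eq_adjoin: "VS.span (insert x S) = adjoin x (VS.span S)"
proof safe
  fix z assume "z \<in> VS.span (insert x S)"
  then obtain k where "z - vscale k x \<in> VS.span S" using VS.span_breakdown_eq by blast
  then show "z \<in> adjoin x (VS.span S)"
    unfolding mem_adjoin_iff by (intro exI[of _ k] exI[of _ "z - vscale k x"]) simp
next
  fix z assume "z \<in> adjoin x (VS.span S)"
  then show "z \<in> VS.span (insert x S)" unfolding mem_adjoin_iff
    by (meson VS.span_add VS.span_base VS.span_mono VS.span_scale insertI1 subsetD subset_insertI)
qed

lemma subspace_adjoin: "VS.subspace S \<Longrightarrow> VS.subspace (adjoin x S)"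
  by (metis span_insert_eq_adjoin VS.subspace_span VS.span_eq_iff)

lemma adjoin_subset: "VS.subspace W \<Longrightarrow> x \<in> W \<Longrightarrow> S \<subseteq> W \<Longrightarrow> adjoin x S \<subseteq> W"
  by (auto simp: mem_adjoin_iff) (meson VS.subspace_add VS.subspace_scale subsetD)

lemma mem_adjoin_self: "0 \<in> S \<Longrightarrow> x \<in> adjoin x S"
  unfolding mem_adjoin_iff by (rule exI[of _ 1], rule exI[of _ 0]) (simp add: vscale_def)

lemma subset_adjoin: "S \<subseteq> adjoin x S"
proof
  fix y assume "y \<in> S"
  moreover have "y = vscale 0 x + y" by (simp add: VS.scale_zero_left)
  ultimately show "y \<in> adjoin x S" unfolding mem_adjoin_iff by blast
qed

lemma card_adjoin:
  fixes S :: "(nat \<Rightarrow> 'a::{field,finite}) set"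
  assumes S: "VS.subspace S" "x \<notin> S"
  shows "card (adjoin x S) = CARD('a) * card S"
proof -
  have "inj_on (\<lambda>(c, y). vscale c x + y) (UNIV \<times> S)"
  proof (rule inj_onI, clarsimp)
    fix c y c' y' assume y: "y \<in> S" "y' \<in> S" and eq: "vscale c x + y = vscale c' x + y'"
    show "c = c' \<and> y = y'"
    proof (rule ccontr)
      assume "\<not> (c = c' \<and> y = y')"
      then have "c \<noteq> c'" using eq by auto
      have "x = vscale (1 / (c - c')) (y' - y)"
      proof
        fix i
        have "(c - c') * x i = y' i - y i"
          using fun_cong[OF eq, of i] by (simp add: vscale_apply algebra_simps)
        moreover have "x i = ((c - c') * x i) / (c - c')" using \<open>c \<noteq> c'\<close> by simp
        ultimately show "x i = vscale (1 / (c - c')) (y' - y) i" by (simp add: vscale_apply)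
      qed
      moreover have "vscale (1 / (c - c')) (y' - y) \<in> S"
        using S(1) y by (intro VS.subspace_scale VS.subspace_diff) auto
      ultimately show False using S(2) by simp
    qed
  qed
  then show ?thesis unfolding adjoin_def by (simp add: card_image card_cartesian_product)
qed

lemma card_span_independent:
  fixes B :: "(nat \<Rightarrow> 'a::{field,finite}) set"
  assumes "finite B" "VS.independent B"
  shows "card (VS.span B) = CARD('a) ^ card B"
  using assms
proof (induction B rule: finite_induct)
  case empty then show ?case by (simp add: VS.span_empty)
next
  case (insert x F)
  then have "x \<notin> VS.span F" "VS.independent F" using VS.independent_insert[of x F] by auto
  then show ?case using insert
    by (simp add: span_insert_eq_adjoin card_adjoin)
qed

lemma card_subspace_eq_power_dim:
  fixes W :: "(nat \<Rightarrow> 'a::{field,finite}) set"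
  assumes "VS.subspace W" "finite W"
  shows "card W = CARD('a) ^ VS.dim W"
proof -
  obtain B where B: "B \<subseteq> W" "VS.independent B" "W \<subseteq> VS.span B" "card B = VS.dim W"
    using VS.basis_exists by blast
  have "VS.span B = W" using B assms(1) VS.span_minimal by blast
  moreover have "finite B" using B(1) assms(2) finite_subset by blast
  ultimately show ?thesis using card_span_independent[OF _ B(2)] B(4) by auto
qed

lemma dim_eq_iff_card_eq_power:
  fixes W :: "(nat \<Rightarrow> 'a::{field,finite}) set"
  assumes "VS.subspace W" "finite W"
  shows "VS.dim W = n \<longleftrightarrow> card W = CARD('a) ^ n"
  using card_subspace_eq_power_dim[OF assms] card_UNIV_field_ge_two[where 'a='a]
  by (simp add: power_inject_exp)

lemma card_le_card_of_proper_subspace: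
  fixes S L :: "(nat \<Rightarrow> 'a::{field,finite}) set"
  assumes "VS.subspace S" "VS.subspace L" "S \<subset> L" "finite L"
  shows "CARD('a) * card S \<le> card L"
proof -
  obtain x where "x \<in> L" "x \<notin> S" using assms(3) by blast
  then have "adjoin x S \<subseteq> L" using assms by (intro adjoin_subset) auto
  then show ?thesis using card_adjoin[OF assms(1) \<open>x \<notin> S\<close>] card_mono[OF assms(4)] by metis
qed

lemma
  fixes T :: "(nat \<Rightarrow> 'a::{field,finite}) set"
  assumes T: "VS.subspace T" "finite T"
    and add: "\<And>x y. x \<in> T \<Longrightarrow> y \<in> T \<Longrightarrow> \<phi> (x + y) = \<phi> x + \<phi> y"
    and scale: "\<And>c x. x \<in> T \<Longrightarrow> \<phi> (vscale c x) = c * \<phi> x"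
    and t0: "t0 \<in> T" "\<phi> t0 \<noteq> 0"
  shows card_eq_mult_card_kernel: "card T = CARD('a) * card {x\<in>T. \<phi> x = 0}"
    and card_level_set: "card {x\<in>T. \<phi> x = a} = card {x\<in>T. \<phi> x = 0}"
proof -
  define t where "t = vscale (1 / \<phi> t0) t0"
  define K where "K = {x\<in>T. \<phi> x = 0}"
  have t: "t \<in> T" "\<phi> t = 1" unfolding t_def using T(1) t0 scale VS.subspace_scale by auto
  have K: "VS.subspace K"
  proof (rule VS.subspaceI)
    show "0 \<in> K" using VS.subspace_0[OF T(1)] scale[of 0 0] by (simp add: K_def VS.scale_zero_left)
  qed (use add scale T(1) in \<open>auto simp: K_def intro: VS.subspace_add VS.subspace_scale\<close>)
  have level: "{x\<in>T. \<phi> x = c} = (\<lambda>y. vscale c t + y) ` K" for c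
  proof (intro equalityI subsetI)
    fix x assume "x \<in> {x\<in>T. \<phi> x = c}"
    then have x: "x \<in> T" "\<phi> x = c" by simp_all
    have "vscale c t \<in> T" using t T(1) VS.subspace_scale by blast
    then have "x - vscale c t \<in> T" "\<phi> x = \<phi> (x - vscale c t) + \<phi> (vscale c t)"
      using x T(1) add[of "x - vscale c t" "vscale c t"] VS.subspace_diff by auto
    then have "x - vscale c t \<in> K" using x t scale by (simp add: K_def)
    then show "x \<in> (\<lambda>y. vscale c t + y) ` K" by (force intro: rev_image_eqI)
  next
    fix z assume "z \<in> (\<lambda>y. vscale c t + y) ` K"
    then obtain y where "y \<in> K" "z = vscale c t + y" by blast
    moreover have "vscale c t \<in> T" using t T(1) VS.subspace_scale by blast
    ultimately show "z \<in> {x\<in>T. \<phi> x = c}"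
      using t add scale T(1) VS.subspace_add by (auto simp: K_def)
  qed
  have "T = adjoin t K"
  proof
    show "adjoin t K \<subseteq> T" using t(1) T(1) by (intro adjoin_subset) (auto simp: K_def)
    show "T \<subseteq> adjoin t K"
    proof
      fix x assume "x \<in> T"
      then have "x \<in> (\<lambda>y. vscale (\<phi> x) t + y) ` K" using level[of "\<phi> x"] by blast
      then show "x \<in> adjoin t K" by (auto simp: mem_adjoin_iff)
    qed
  qed
  moreover have "t \<notin> K" using t by (simp add: K_def)
  ultimately have "card T = CARD('a) * card K" using card_adjoin[OF K] by simp
  then show "card T = CARD('a) * card {x\<in>T. \<phi> x = 0}" by (simp add: K_def)
  show "card {x\<in>T. \<phi> x = a} = card {x\<in>T. \<phi> x = 0}"
    unfolding level[of a] K_def[symmetric] by (simp add: card_image inj_on_def)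
qed

lemma card_le_mult_card_coordinate_zero:
  fixes W :: "(nat \<Rightarrow> 'a::{field,finite}) set"
  assumes "VS.subspace W" "finite W"
  shows "card W \<le> CARD('a) * card {x\<in>W. x j = 0}"
proof (cases "\<exists>x\<in>W. x j \<noteq> 0")
  case True
  then obtain t where "t \<in> W" "t j \<noteq> 0" by blast
  then show ?thesis
    using card_eq_mult_card_kernel[where \<phi>="\<lambda>x. x j", OF assms] by (simp add: vscale_apply)
next
  case False
  then have "{x\<in>W. x j = 0} = W" by auto
  then show ?thesis by simp
qed

definition unit_vec :: "nat \<Rightarrow> nat \<Rightarrow> 'a::{zero,one}" where
  "unit_vec k = (\<lambda>i. if i = k then 1 else 0)"

lemma unit_vec_in_coordspace: "k \<in> {1..N} \<Longrightarrow> unit_vec k \<in> coordspace N"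
  by (auto simp: unit_vec_def coordspace_def)

lemma clear_coordinate_decomp: "x = x(k := 0) + vscale (x k) (unit_vec k)"
  by (auto simp: fun_eq_iff vscale_apply unit_vec_def)

lemma clear_coordinate_linear:
  "(x + y)(k := 0) = x(k := 0) + y(k := (0::'a::field))"
  "(vscale c x)(k := 0) = vscale c (x(k := 0))"
  by (auto simp: fun_eq_iff vscale_apply)

lemma coordinate_zero_adjoin_unit_vec:
  assumes "\<forall>u\<in>U. u k = 0"
  shows "{x \<in> adjoin (unit_vec k) U. x k = (0::'a::field)} = U"
proof -
  have "x \<in> U" if x: "x \<in> adjoin (unit_vec k) U" "x k = 0" for x
  proof -
    obtain c u where cu: "u \<in> U" "x = vscale c (unit_vec k) + u" using x(1) by (auto simp: mem_adjoin_iff)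
    then have "c = 0" using x(2) bspec[OF assms cu(1)] by (simp add: vscale_apply unit_vec_def)
    then show ?thesis using cu by (simp add: VS.scale_zero_left)
  qed
  then show ?thesis using subset_adjoin[of U "unit_vec k"] assms by auto
qed

lemma adjoin_unit_vec_coordinate_zero:
  assumes W: "VS.subspace W" "unit_vec k \<in> W"
  shows "adjoin (unit_vec k) {x \<in> W. x k = (0::'a::field)} = W"
proof
  show "adjoin (unit_vec k) {x \<in> W. x k = 0} \<subseteq> W" using W by (intro adjoin_subset) auto
  show "W \<subseteq> adjoin (unit_vec k) {x \<in> W. x k = 0}"
  proof
    fix x assume x: "x \<in> W"
    have "x - vscale (x k) (unit_vec k) \<in> W" using x W VS.subspace_diff VS.subspace_scale by blast
    moreover have "x(k := 0) = x - vscale (x k) (unit_vec k)"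
      by (auto simp: fun_eq_iff vscale_apply unit_vec_def)
    ultimately have "x(k := 0) \<in> {x \<in> W. x k = 0}" by (simp add: vscale_apply unit_vec_def)
    moreover have "x = vscale (x k) (unit_vec k) + x(k := 0)"
      using clear_coordinate_decomp[of x k] by (simp add: add.commute)
    ultimately show "x \<in> adjoin (unit_vec k) {x \<in> W. x k = 0}"
      unfolding mem_adjoin_iff by blast
  qed
qed

lemma inj_on_clear_coordinate:
  assumes "VS.subspace W" "unit_vec k \<notin> W"
  shows "inj_on (\<lambda>x. x(k := (0::'a::field))) W"
proof (rule inj_onI, rule ccontr)
  fix x y assume xy: "x \<in> W" "y \<in> W" "x(k := 0) = y(k := 0)" "x \<noteq> y"
  have d: "x - y = vscale (x k - y k) (unit_vec k)"
  proof
    fix i show "(x - y) i = vscale (x k - y k) (unit_vec k) i"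
      using fun_cong[OF xy(3), of i] by (auto simp: vscale_apply unit_vec_def)
  qed
  then have "x k \<noteq> y k" using xy(4) by (auto simp: vscale_apply unit_vec_def fun_eq_iff)
  then have "unit_vec k = vscale (1 / (x k - y k)) (x - y)"
    unfolding d by (simp add: fun_eq_iff vscale_apply)
  also have "\<dots> \<in> W" using xy assms(1) VS.subspace_diff VS.subspace_scale by blast
  finally show False using assms(2) by simp
qed

lemma prod_reflect_atLeastLessThan:
  "(n::nat) \<ge> 2 \<Longrightarrow> (\<Prod>i=1..n-2. f (n - i)) = (\<Prod>j\<in>{2..<n}. (f j :: 'a::comm_monoid_mult))"
  by (rule prod.reindex_bij_witness[where i="\<lambda>j. n - j" and j="\<lambda>i. n - i"]) auto

section \<open>The quadratic form and its polar forms\<close>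

lemma sum_reflected_halves:
  fixes g :: "nat \<Rightarrow> 'a::comm_monoid_add"
  shows "(\<Sum>i=1..2*n+2. g i) = g 1 + g (2*n+2) + (\<Sum>i=2..n+1. g i) + (\<Sum>i=2..n+1. g (2*n+3-i))"
proof -
  let ?X = "{2..n+1} \<union> {n+2..2*n+1}"
  have "{1..2*n+2} = insert 1 (insert (2*n+2) ?X)" by auto
  then have "(\<Sum>i=1..2*n+2. g i) = g 1 + (g (2*n+2) + sum g ?X)" by simp
  also have "sum g ?X = (\<Sum>i=2..n+1. g i) + (\<Sum>i=n+2..2*n+1. g i)"
    by (rule sum.union_disjoint) auto
  also have "(\<Sum>i=n+2..2*n+1. g i) = (\<Sum>i=2..n+1. g (2*n+3-i))"
    by (rule sum.reindex_bij_witness[where i="\<lambda>j. 2*n+3-j" and j="\<lambda>i. 2*n+3-i"]) auto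
  finally show ?thesis by (simp add: add.assoc)
qed

locale even_elliptic =
  fixes \<delta> \<mu> :: "'a::{field,finite}"
  assumes char_two: "(1::'a) + 1 = 0"
    and no_root: "\<And>x. x * x + x + \<delta> \<noteq> 0"
    and mu_nonzero: "\<mu> \<noteq> 0"
begin

lemma two_eq_zero: "(2::'a) = 0"
  using char_two by (metis one_add_one)

lemma add_self [simp]: "(z::'a) + z = 0"
  using char_two by (metis distrib_left mult.right_neutral mult_zero_right)

lemma uminus_self [simp]: "- (z::'a) = z"
  using add_self by (metis add_eq_0_iff)

lemma eq_if_add_eq_zero: "(a::'a) + b = 0 \<Longrightarrow> a = b"
  by (metis add_eq_0_iff uminus_self)

lemma anisotropic:
  assumes "a * a + a * b + \<delta> * (b * b) = 0"
  shows "a = (0::'a) \<and> b = 0"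
proof (cases "b = 0")
  case True then show ?thesis using assms by simp
next
  case False
  have "(a/b) * (a/b) + a/b + \<delta> = (a * a + a * b + \<delta> * (b * b)) / (b * b)"
    using False by (simp add: field_simps)
  then show ?thesis using assms no_root by (metis div_0)
qed

abbreviation Q where "Q n \<equiv> Qform n \<delta> \<mu>"

text \<open>\<open>B0\<close> is the polar form of the \<open>\<mu>\<close>-free part of \<open>Q\<close>, and \<open>Bmu\<close> that of
  \<open>X\<^sub>2\<^sub>n\<^sup>2 + X\<^sub>2\<^sub>n X\<^sub>2\<^sub>n\<^sub>+\<^sub>1 + \<delta> X\<^sub>2\<^sub>n\<^sub>+\<^sub>1\<^sup>2\<close>.\<close>

definition Bmu :: "nat \<Rightarrow> (nat \<Rightarrow> 'a) \<Rightarrow> (nat \<Rightarrow> 'a) \<Rightarrow> 'a" where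
  "Bmu n x y = x (2*n) * y (2*n+1) + x (2*n+1) * y (2*n)"

definition polar :: "nat \<Rightarrow> (nat \<Rightarrow> 'a) \<Rightarrow> (nat \<Rightarrow> 'a) \<Rightarrow> 'a" where
  "polar n x y = B0 n x y + \<mu> * Bmu n x y"

definition hyp_half :: "nat \<Rightarrow> (nat \<Rightarrow> 'a) \<Rightarrow> (nat \<Rightarrow> 'a) \<Rightarrow> 'a" where
  "hyp_half n x y = (\<Sum>i=2..n+1. x i * y (2*n+3-i))"

lemma B0_eq: "B0 n x y = x 1 * y (2*n+2) + x (2*n+2) * y 1 + hyp_half n x y + hyp_half n y x"
  unfolding B0_def hyp_half_def sum_reflected_halves by (simp add: mult.commute add_ac)

lemma Q_eq: "Q n x = x 1 ^ 2 + x 1 * x (2*n+2) + \<delta> * x (2*n+2) ^ 2 + hyp_half n x x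
     + \<mu> * (x (2*n) ^ 2 + x (2*n) * x (2*n+1) + \<delta> * x (2*n+1) ^ 2)"
  by (simp add: Qform_def hyp_half_def)

lemma hyp_half_add: "hyp_half n (x + x') y = hyp_half n x y + hyp_half n x' y"
    "hyp_half n x (y + y') = hyp_half n x y + hyp_half n x y'"
  by (simp_all add: hyp_half_def sum.distrib algebra_simps)

lemma hyp_half_scale: "hyp_half n (vscale c x) y = c * hyp_half n x y"
    "hyp_half n x (vscale c y) = c * hyp_half n x y"
  by (simp_all add: hyp_half_def sum_distrib_left vscale_apply algebra_simps)

lemma Q_add: "Q n (x + y) = Q n x + Q n y + polar n x y"
proof -
  have "Q n (x + y) = Q n x + Q n y + polar n x y + 2 * (x 1 * y 1 + \<delta> * (x (2*n+2) * y (2*n+2))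
      + \<mu> * (x (2*n) * y (2*n) + \<delta> * (x (2*n+1) * y (2*n+1))))"
    unfolding Q_eq polar_def B0_eq Bmu_def hyp_half_add by (simp add: algebra_simps power2_eq_square)
  then show ?thesis by (simp add: two_eq_zero)
qed

lemma Q_scale: "Q n (vscale c x) = c\<^sup>2 * Q n x"
  unfolding Q_eq hyp_half_scale by (simp add: vscale_apply algebra_simps power2_eq_square)

lemma Q_zero [simp]: "Q n 0 = 0"
  by (simp add: Q_eq hyp_half_def)

lemma B0_add: "B0 n (x + x') y = B0 n x y + B0 n x' y" "B0 n x (y + y') = B0 n x y + B0 n x y'"
  by (simp_all add: B0_def sum.distrib algebra_simps)

lemma B0_scale: "B0 n (vscale c x) y = c * B0 n x y" "B0 n x (vscale c y) = c * B0 n x y"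
  by (simp_all add: B0_def sum_distrib_left vscale_apply algebra_simps)

lemma B0_sym: "B0 n x y = B0 n y (x::nat\<Rightarrow>'a)"
  using B0_eq[of n x y] B0_eq[of n y x] by (simp add: mult.commute add_ac)

lemma B0_unit_vec:
  assumes "k \<in> {1..2*n+2}"
  shows "B0 n (unit_vec k) x = x (2*n+3-k)"
proof -
  have "B0 n (unit_vec k) x = (\<Sum>i=1..2*n+2. if i = k then x (2*n+3-i) else 0)"
    unfolding B0_def unit_vec_def by (rule sum.cong) auto
  then show ?thesis using assms by simp
qed

lemma Bmu_add: "Bmu n (x + x') y = Bmu n x y + Bmu n x' y" "Bmu n x (y + y') = Bmu n x y + Bmu n x y'"
  by (simp_all add: Bmu_def algebra_simps)

lemma Bmu_scale: "Bmu n (vscale c x) y = c * Bmu n x y" "Bmu n x (vscale c y) = c * Bmu n x y"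
  by (simp_all add: Bmu_def vscale_apply algebra_simps)

lemma Bmu_sym: "Bmu n x y = Bmu n y x"
  by (simp add: Bmu_def mult.commute add.commute)

lemma Bmu_self [simp]: "Bmu n x x = 0"
  by (simp add: Bmu_def mult.commute)

lemma Bmu_unit_vec: "k \<noteq> 2*n \<Longrightarrow> k \<noteq> 2*n+1 \<Longrightarrow> Bmu n (unit_vec k) x = 0"
  by (simp add: Bmu_def unit_vec_def)

lemma polar_add: "polar n (x + x') y = polar n x y + polar n x' y"
    "polar n x (y + y') = polar n x y + polar n x y'"
  by (simp_all add: polar_def B0_add Bmu_add algebra_simps)

lemma polar_scale: "polar n (vscale c x) y = c * polar n x y" "polar n x (vscale c y) = c * polar n x y"
  by (simp_all add: polar_def B0_scale Bmu_scale algebra_simps)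

lemma polar_sym: "polar n x y = polar n y x"
  by (simp add: polar_def B0_sym Bmu_sym)

lemma polar_zero [simp]: "polar n x 0 = 0"
  using polar_scale(2)[of n x 0 0] by (simp add: VS.scale_zero_left)

lemma polar_unit_vec:
  "k \<in> {1..2*n+2} \<Longrightarrow> k \<noteq> 2*n \<Longrightarrow> k \<noteq> 2*n+1 \<Longrightarrow> polar n (unit_vec k) x = x (2*n+3-k)"
  by (simp add: polar_def Bmu_unit_vec B0_unit_vec)

section \<open>Totally singular subspaces isotropic for \<open>Bmu\<close>\<close>

text \<open>On a totally singular subspace the polar form \<open>B0 + \<mu> Bmu\<close> vanishes, so being totally
  isotropic for \<open>B0\<close> is the same as being totally isotropic for \<open>Bmu\<close>. The generators are counted
  together with those lying in \<open>tail_zero n\<close> (flag \<open>b = True\<close>), since the recursion in \<open>n\<close> mixes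
  the two counts.\<close>

definition tail_zero :: "nat \<Rightarrow> (nat \<Rightarrow> 'a) set" where
  "tail_zero n = {x. x (2*n) = 0 \<and> x (2*n+1) = 0}"

definition tail :: "nat \<Rightarrow> bool \<Rightarrow> (nat \<Rightarrow> 'a) set" where
  "tail n b = (if b then tail_zero n else UNIV)"

definition singular_isotropic :: "nat \<Rightarrow> (nat \<Rightarrow> 'a) set \<Rightarrow> bool" where
  "singular_isotropic n W \<longleftrightarrow> W \<subseteq> coordspace (2*n+2) \<and> VS.subspace W
     \<and> (\<forall>x\<in>W. Q n x = 0) \<and> (\<forall>x\<in>W. \<forall>y\<in>W. Bmu n x y = 0)"

definition iso_gens :: "nat \<Rightarrow> bool \<Rightarrow> (nat \<Rightarrow> 'a) set set" where
  "iso_gens n b = {W. singular_isotropic n W \<and> card W = CARD('a) ^ n \<and> W \<subseteq> tail n b}"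

lemma subspace_tail: "VS.subspace (tail n b)"
  unfolding tail_def tail_zero_def VS.subspace_def by (auto simp: vscale_apply)

lemma polar_eq_zero_if_singular:
  assumes "VS.subspace W" "\<forall>x\<in>W. Q n x = 0" "x \<in> W" "y \<in> W"
  shows "polar n x y = 0"
  using assms VS.subspace_add[OF assms(1,3,4)] Q_add[of n x y] by simp

lemma polar_eq_zero_if_singular_isotropic:
  "singular_isotropic n W \<Longrightarrow> x \<in> W \<Longrightarrow> y \<in> W \<Longrightarrow> polar n x y = 0"
  unfolding singular_isotropic_def using polar_eq_zero_if_singular by blast

lemma finite_singular_isotropic: "singular_isotropic n W \<Longrightarrow> finite W"
  unfolding singular_isotropic_def using finite_coordspace finite_subset by blast

lemma finite_of_iso_gens: "W \<in> iso_gens n b \<Longrightarrow> finite W"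
  by (auto simp: iso_gens_def intro: finite_singular_isotropic)

lemma finite_iso_gens: "finite (iso_gens n b)"
proof -
  have "iso_gens n b \<subseteq> Pow (coordspace (2*n+2))"
    by (auto simp: iso_gens_def singular_isotropic_def)
  then show ?thesis using finite_coordspace finite_subset by blast
qed

lemma B0_isotropic_generators_eq_iso_gens:
  "{W \<in> generators n \<delta> \<mu>. totally_isotropic_B0 n W} = iso_gens n False"
proof -
  have "W \<in> generators n \<delta> \<mu> \<and> totally_isotropic_B0 n W \<longleftrightarrow> W \<in> iso_gens n False" for W
  proof (cases "W \<subseteq> coordspace (2*n+2) \<and> VS.subspace W \<and> (\<forall>x\<in>W. Q n x = 0)")
    case True
    then have "finite W" using finite_coordspace finite_subset by blast
    have "B0 n x y = \<mu> * Bmu n x y" if "x \<in> W" "y \<in> W" for x y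
      using polar_eq_zero_if_singular[of W n x y] True that eq_if_add_eq_zero
      by (simp add: polar_def)
    then have "(\<forall>x\<in>W. \<forall>y\<in>W. B0 n x y = 0) \<longleftrightarrow> (\<forall>x\<in>W. \<forall>y\<in>W. Bmu n x y = 0)"
      using mu_nonzero by auto
    then show ?thesis using True dim_eq_iff_card_eq_power[OF _ \<open>finite W\<close>, of n]
      by (auto simp: generators_def totally_isotropic_B0_def iso_gens_def singular_isotropic_def tail_def)
  next
    case False
    then show ?thesis by (auto simp: generators_def iso_gens_def singular_isotropic_def)
  qed
  then show ?thesis by blast
qed

subsection \<open>Removing a hyperbolic pair\<close>

text \<open>For \<open>n = m + 1\<close> the coordinates \<open>n+1, n+2\<close> form a hyperbolic pair of \<open>Q n\<close>; deleting them
  maps the vectors of \<open>perp_pair n\<close> isometrically onto the coordinate space of \<open>Q m\<close>.\<close>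

definition perp_pair :: "nat \<Rightarrow> (nat \<Rightarrow> 'a) set" where
  "perp_pair n = supported_on ({1..2*n+2} - {n+1, n+2})"

definition drop_pair :: "nat \<Rightarrow> (nat \<Rightarrow> 'a) \<Rightarrow> (nat \<Rightarrow> 'a)" where
  "drop_pair n x = (\<lambda>i. if i \<le> n then x i else x (i+2))"

definition insert_pair :: "nat \<Rightarrow> (nat \<Rightarrow> 'a) \<Rightarrow> (nat \<Rightarrow> 'a)" where
  "insert_pair n y = (\<lambda>i. if i \<le> n then y i else if i \<le> n+2 then 0 else y (i-2))"

lemma subspace_perp_pair: "VS.subspace (perp_pair n)"
  by (simp add: perp_pair_def subspace_supported_on)

lemma perp_pair_coordinates:
  "u \<in> perp_pair (Suc m) \<Longrightarrow> u (m+2) = 0 \<and> u (m+3) = 0 \<and> u \<in> coordspace (2*Suc m+2)"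
  by (auto simp: perp_pair_def supported_on_def coordspace_def numeral_3_eq_3)

lemma perp_pair_subset_coordspace: "perp_pair (Suc m) \<subseteq> coordspace (2*Suc m+2)"
  using perp_pair_coordinates by blast

lemma
  shows card_perp_pair: "card (perp_pair (Suc m)) = CARD('a) ^ (2*m+2)"
    and finite_perp_pair: "finite (perp_pair (Suc m))"
proof -
  have "card ({1..2*Suc m+2} - {Suc m+1, Suc m+2}) = 2*m+2" by (simp add: card_Diff_subset)
  then show "card (perp_pair (Suc m)) = CARD('a) ^ (2*m+2)" "finite (perp_pair (Suc m))"
    by (simp_all add: perp_pair_def card_supported_on finite_supported_on)
qed

lemma drop_pair_linear: "drop_pair n (x + y) = drop_pair n x + drop_pair n y"
    "drop_pair n (vscale c x) = vscale c (drop_pair n x)"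
  by (auto simp: drop_pair_def fun_eq_iff vscale_apply)

lemma insert_pair_linear: "insert_pair n (x + y) = insert_pair n x + insert_pair n y"
    "insert_pair n (vscale c x) = vscale c (insert_pair n x)"
  by (auto simp: insert_pair_def fun_eq_iff vscale_apply)

lemma drop_pair_in_coordspace: "x \<in> perp_pair (Suc m) \<Longrightarrow> drop_pair (Suc m) x \<in> coordspace (2*m+2)"
  by (auto simp: perp_pair_def supported_on_def coordspace_def drop_pair_def)

lemma insert_pair_in_perp_pair:
  assumes y: "y \<in> coordspace (2*m+2)"
  shows "insert_pair (Suc m) y \<in> perp_pair (Suc m)"
  unfolding perp_pair_def supported_on_def
proof (intro CollectI allI impI)
  fix i assume i: "i \<notin> {1..2*Suc m+2} - {Suc m+1, Suc m+2}"
  show "insert_pair (Suc m) y i = 0"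
  proof (cases "i \<le> Suc m + 2")
    case True then show ?thesis using i y by (auto simp: insert_pair_def coordspace_def)
  next
    case False
    then have "i - 2 \<notin> {1..2*m+2}" using i by auto
    then show ?thesis using False y by (simp add: insert_pair_def coordspace_def)
  qed
qed

lemma insert_pair_drop_pair:
  assumes x: "x \<in> perp_pair n"
  shows "insert_pair n (drop_pair n x) = x"
proof
  fix i
  show "insert_pair n (drop_pair n x) i = x i"
  proof (cases "n < i \<and> i \<le> n + 2")
    case True
    then have "i \<in> {n+1, n+2}" by auto
    then show ?thesis using x True by (auto simp: perp_pair_def supported_on_def insert_pair_def)
  next
    case False
    then have "i \<le> n \<or> Suc (Suc (i - 2)) = i" by auto
    then show ?thesis using False by (auto simp: insert_pair_def drop_pair_def)
  qed
qed

lemma drop_pair_insert_pair [simp]: "drop_pair n (insert_pair n y) = y"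
  by (auto simp: insert_pair_def drop_pair_def fun_eq_iff)

lemma Q_drop_pair:
  assumes "x \<in> perp_pair (Suc m)" "m \<ge> 2"
  shows "Q m (drop_pair (Suc m) x) = Q (Suc m) x"
proof -
  have "x (m+2) = 0" using assms(1) perp_pair_coordinates by blast
  have "hyp_half (m+1) x x = (\<Sum>i=2..m+1. x i * x (2*(m+1)+3-i)) + x (m+2) * x (2*(m+1)+3-(m+2))"
    unfolding hyp_half_def by (simp add: add.commute)
  also have "\<dots> = (\<Sum>i=2..m+1. x i * x (2*(m+1)+3-i))" using \<open>x (m+2) = 0\<close> by simp
  also have "\<dots> = hyp_half m (drop_pair (m+1) x) (drop_pair (m+1) x)"
    unfolding hyp_half_def by (rule sum.cong) (auto simp: drop_pair_def intro!: arg_cong[where f=x])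
  finally have "hyp_half (m+1) x x = hyp_half m (drop_pair (m+1) x) (drop_pair (m+1) x)" .
  then show ?thesis using assms(2) by (simp add: Q_eq drop_pair_def)
qed

lemma Bmu_drop_pair: "m \<ge> 2 \<Longrightarrow> Bmu m (drop_pair (Suc m) x) (drop_pair (Suc m) y) = Bmu (Suc m) x y"
  by (simp add: Bmu_def drop_pair_def)

lemma tail_drop_pair: "m \<ge> 2 \<Longrightarrow> drop_pair (Suc m) x \<in> tail m b \<longleftrightarrow> x \<in> tail (Suc m) b"
  by (simp add: tail_def tail_zero_def drop_pair_def)

lemma singular_isotropic_drop_pair:
  assumes m: "m \<ge> 2" and U: "singular_isotropic (Suc m) U" "U \<subseteq> perp_pair (Suc m)"
  shows "singular_isotropic m (drop_pair (Suc m) ` U)" "card (drop_pair (Suc m) ` U) = card U"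
proof -
  have "inj_on (drop_pair (Suc m)) U"
    by (rule inj_on_inverseI[where g="insert_pair (Suc m)"]) (use U(2) insert_pair_drop_pair in blast)
  then show "card (drop_pair (Suc m) ` U) = card U" by (rule card_image)
  show "singular_isotropic m (drop_pair (Suc m) ` U)"
    using U drop_pair_in_coordspace subspace_image_linear[OF drop_pair_linear[where n="Suc m"]] Q_drop_pair[OF _ m]
      Bmu_drop_pair[OF m]
    by (fastforce simp: singular_isotropic_def)
qed

subsection \<open>Witt's bound\<close>

lemma Q_unit_vec_pair:
  assumes "n \<ge> 3" "k \<in> {n+1, n+2}"
  shows "Q n (unit_vec k) = 0"
proof -
  have "hyp_half n (unit_vec k) (unit_vec k) = 0"
    unfolding hyp_half_def by (rule sum.neutral) (use assms in \<open>auto simp: unit_vec_def\<close>)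
  then show ?thesis using assms unfolding Q_eq by (auto simp: unit_vec_def)
qed

lemma Q_clear_coordinate:
  assumes "n \<ge> 3"
  shows "Q n x = Q n (x(n+1 := 0)) + x (n+1) * x (n+2)"
proof -
  have "Q n x = Q n (x(n+1 := 0) + vscale (x (n+1)) (unit_vec (n+1)))"
    using clear_coordinate_decomp[of x "n+1"] by simp
  also have "\<dots> = Q n (x(n+1 := 0)) + x (n+1) * polar n (x(n+1 := 0)) (unit_vec (n+1))"
    using Q_unit_vec_pair[OF assms] by (simp add: Q_add Q_scale polar_scale)
  also have "polar n (x(n+1 := 0)) (unit_vec (n+1)) = x (n+2)"
    using assms by (subst polar_sym) (simp add: polar_unit_vec)
  finally show ?thesis .
qed

lemma hyp_half_2: "hyp_half 2 x y = x 2 * y 5 + x 3 * y 4"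
proof -
  have "{2..2+1::nat} = {2,3}" by auto
  then show ?thesis unfolding hyp_half_def by simp
qed

lemma Q_plane23: "Q 2 x = x 1 ^ 2 + x 1 * x 6 + \<delta> * x 6 ^ 2 + x 2 * x 5 + x 3 * x 4
     + \<mu> * (x 4 ^ 2 + x 4 * x 5 + \<delta> * x 5 ^ 2)"
  unfolding Q_eq hyp_half_2 by simp

lemma polar_plane23: "t \<in> supported_on {2, 3} \<Longrightarrow> polar 2 t w = t 2 * w 5 + t 3 * w 4"
  unfolding polar_def B0_eq hyp_half_2 Bmu_def supported_on_def by simp

lemma singular_tail_zero_2_subset_plane23:
  assumes "x \<in> coordspace 6" "x \<in> tail_zero 2" "Q 2 x = 0"
  shows "x \<in> supported_on {2, 3}"
proof -
  have "x 4 = 0" "x 5 = 0" using assms(2) by (simp_all add: tail_zero_def)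
  then have "x 1 * x 1 + x 1 * x 6 + \<delta> * (x 6 * x 6) = 0"
    using assms(3) unfolding Q_plane23 by (simp add: power2_eq_square)
  then have "x 1 = 0" "x 6 = 0" using anisotropic by blast+
  show ?thesis unfolding supported_on_def
  proof (intro CollectI allI impI)
    fix i :: nat assume "i \<notin> {2, 3}"
    then show "x i = 0" using assms(1) \<open>x 1 = 0\<close> \<open>x 4 = 0\<close> \<open>x 5 = 0\<close> \<open>x 6 = 0\<close>
      by (cases "i \<in> {1, 4, 5, 6}") (auto simp: coordspace_def)
  qed
qed

lemma singular_isotropic_coordinate_zero_eq:
  assumes W: "singular_isotropic n W" and w: "w \<in> W" "w \<notin> tail_zero n"
  shows "{t\<in>W. t (if w (2*n) \<noteq> 0 then 2*n else 2*n+1) = 0} = W \<inter> tail_zero n"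
proof -
  have "t (if w (2*n) \<noteq> 0 then 2*n else 2*n+1) = 0 \<longleftrightarrow> t \<in> tail_zero n" if "t \<in> W" for t
  proof -
    have "w (2*n) * t (2*n+1) + w (2*n+1) * t (2*n) = 0"
      using W w(1) that by (simp add: singular_isotropic_def Bmu_def)
    then show ?thesis using w(2) by (auto simp: tail_zero_def)
  qed
  then show ?thesis by blast
qed

lemma card_singular_isotropic_eq_card_tail_zero:
  assumes W: "singular_isotropic n W" and w: "w \<in> W" "w \<notin> tail_zero n"
  shows "card W = CARD('a) * card (W \<inter> tail_zero n)"
proof -
  let ?j = "if w (2*n) \<noteq> 0 then 2*n else 2*n+1"
  have "VS.subspace W" "finite W" using W finite_singular_isotropic by (auto simp: singular_isotropic_def)
  moreover have "w ?j \<noteq> 0" using w(2) by (auto simp: tail_zero_def)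
  ultimately have "card W = CARD('a) * card {t\<in>W. t ?j = 0}"
    using card_eq_mult_card_kernel[OF _ _ _ _ w(1)] by (simp add: vscale_apply)
  then show ?thesis using singular_isotropic_coordinate_zero_eq[OF assms] by simp
qed

lemma card_singular_isotropic_2_le:
  assumes W: "singular_isotropic 2 W"
  shows "card W \<le> CARD('a) ^ 2"
proof -
  let ?P = "supported_on {2, 3} :: (nat \<Rightarrow> 'a) set"
  have P: "VS.subspace ?P" "finite ?P" "card ?P = CARD('a) ^ 2"
    by (simp_all add: subspace_supported_on finite_supported_on card_supported_on power2_eq_square)
  have sW: "VS.subspace W" and fW: "finite W"
    using W finite_singular_isotropic[OF W] by (auto simp: singular_isotropic_def)
  define WK where "WK = W \<inter> tail_zero 2"
  have WK: "VS.subspace WK" "WK \<subseteq> ?P"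
    using W singular_tail_zero_2_subset_plane23 VS.subspace_inter[OF sW subspace_tail[of 2 True]]
    by (auto simp: WK_def singular_isotropic_def tail_def)
  show ?thesis
  proof (cases "W \<subseteq> tail_zero 2")
    case True
    then show ?thesis using WK P card_mono by (metis WK_def inf.absorb1)
  next
    case False
    then obtain w where w: "w \<in> W" "w \<notin> tail_zero 2" by blast
    then have cW: "card W = CARD('a) * card WK"
      unfolding WK_def by (rule card_singular_isotropic_eq_card_tail_zero[OF W])
    have "WK \<noteq> ?P"
    proof
      assume "WK = ?P"
      then have "unit_vec 2 \<in> W" "unit_vec 3 \<in> W"
        unfolding WK_def by (auto simp: supported_on_def unit_vec_def)
      then have "polar 2 (unit_vec 2) w = 0" "polar 2 (unit_vec 3) w = 0"
        using polar_eq_zero_if_singular_isotropic[OF W _ w(1)] by auto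
      moreover have "polar 2 (unit_vec 2) w = w 5" "polar 2 (unit_vec 3) w = w 4"
        by (simp_all add: polar_unit_vec)
      ultimately show False using w(2) by (simp add: tail_zero_def)
    qed
    then have "CARD('a) * card WK \<le> CARD('a) ^ 2"
      using card_le_card_of_proper_subspace[OF WK(1) P(1) _ P(2)] WK(2) P(3) by auto
    then show ?thesis using cW by simp
  qed
qed

text \<open>For \<open>n = Suc m\<close>, the unit vectors \<open>pair_e m = e\<^sub>n\<^sub>+\<^sub>1\<close> and \<open>pair_f m = e\<^sub>n\<^sub>+\<^sub>2\<close> form a
  hyperbolic pair of \<open>Q n\<close> spanning the complement of \<open>perp_pair n\<close>.\<close>

abbreviation pair_e :: "nat \<Rightarrow> nat \<Rightarrow> 'a" where "pair_e m \<equiv> unit_vec (m+2)"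
abbreviation pair_f :: "nat \<Rightarrow> nat \<Rightarrow> 'a" where "pair_f m \<equiv> unit_vec (m+3)"

lemma pair_e_facts:
  assumes m: "m \<ge> 2"
  shows "pair_e m \<in> coordspace (2*Suc m+2)" "Q (Suc m) (pair_e m) = 0"
    "Bmu (Suc m) (pair_e m) x = 0" "polar (Suc m) (pair_e m) x = x (m+3)"
    "polar (Suc m) x (pair_e m) = x (m+3)" "pair_e m \<in> tail (Suc m) b"
    "pair_e m \<notin> perp_pair (Suc m)"
proof -
  show "pair_e m \<in> coordspace (2*Suc m+2)" by (rule unit_vec_in_coordspace) simp
  show "Q (Suc m) (pair_e m) = 0" using m by (intro Q_unit_vec_pair) auto
  show "Bmu (Suc m) (pair_e m) x = 0" using m by (intro Bmu_unit_vec) auto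
  show "polar (Suc m) (pair_e m) x = x (m+3)" using m polar_unit_vec[of "m+2" "Suc m" x] by simp
  then show "polar (Suc m) x (pair_e m) = x (m+3)" by (simp add: polar_sym)
  show "pair_e m \<in> tail (Suc m) b" using m by (simp add: tail_def tail_zero_def unit_vec_def)
  show "pair_e m \<notin> perp_pair (Suc m)" by (simp add: perp_pair_def supported_on_def unit_vec_def)
qed

lemma pair_f_facts:
  assumes m: "m \<ge> 2"
  shows "Q (Suc m) (pair_f m) = 0" "polar (Suc m) (pair_f m) x = x (m+2)"
    "polar (Suc m) x (pair_f m) = x (m+2)"
proof -
  show "Q (Suc m) (pair_f m) = 0" using m by (intro Q_unit_vec_pair) auto
  show "polar (Suc m) (pair_f m) x = x (m+2)" using m polar_unit_vec[of "m+3" "Suc m" x] by simp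
  then show "polar (Suc m) x (pair_f m) = x (m+2)" by (simp add: polar_sym)
qed

text \<open>\<open>project_perp m W\<close> is the image of \<open>W \<inter> (pair_e m)\<^sup>\<perp>\<close> in \<open>perp_pair (Suc m)\<close>, obtained by
  clearing the \<open>pair_e\<close>-coordinate.\<close>

definition project_perp :: "nat \<Rightarrow> (nat \<Rightarrow> 'a) set \<Rightarrow> (nat \<Rightarrow> 'a) set" where
  "project_perp m W = (\<lambda>x. x(m+2 := 0)) ` {x\<in>W. x (m+3) = 0}"

lemma project_perp_singular_isotropic:
  assumes m: "m \<ge> 2" and W: "singular_isotropic (Suc m) W"
  shows "singular_isotropic (Suc m) (project_perp m W)" "project_perp m W \<subseteq> perp_pair (Suc m)"
proof -
  let ?W = "{x\<in>W. x (m+3) = 0}"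
  have sub: "VS.subspace ?W" using W by (intro subspace_coordinate_zero) (simp add: singular_isotropic_def)
  have m3: "m + 3 = Suc (Suc (Suc m))" by simp
  show "project_perp m W \<subseteq> perp_pair (Suc m)"
    using W unfolding project_perp_def singular_isotropic_def perp_pair_def supported_on_def
      coordspace_def m3 by auto
  then have "project_perp m W \<subseteq> coordspace (2*Suc m+2)" using perp_pair_subset_coordspace by blast
  moreover have "VS.subspace (project_perp m W)"
    unfolding project_perp_def by (rule subspace_image_linear[OF clear_coordinate_linear sub])
  moreover have "Q (Suc m) x = 0" if x: "x \<in> project_perp m W" for x
  proof -
    obtain y where y: "y \<in> W" "y (m+3) = 0" "x = y(m+2 := 0)"
      using x by (auto simp: project_perp_def)
    have "Q (Suc m) y = Q (Suc m) (y(Suc m + 1 := 0)) + y (Suc m + 1) * y (Suc m + 2)"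
      using m by (intro Q_clear_coordinate) simp
    then show ?thesis using y W unfolding singular_isotropic_def by (simp add: m3)
  qed
  moreover have "Bmu (Suc m) x y = 0" if "x \<in> project_perp m W" "y \<in> project_perp m W" for x y
    using that W m by (auto simp: project_perp_def singular_isotropic_def Bmu_def)
  ultimately show "singular_isotropic (Suc m) (project_perp m W)"
    by (simp add: singular_isotropic_def)
qed

lemma card_project_perp:
  assumes "singular_isotropic (Suc m) W" "pair_e m \<notin> W"
  shows "card (project_perp m W) = card {x\<in>W. x (m+3) = 0}"
  unfolding project_perp_def using assms
  by (intro card_image inj_on_subset[OF inj_on_clear_coordinate]) (auto simp: singular_isotropic_def)

lemma card_singular_isotropic_Suc_le:
  assumes m: "m \<ge> 2" and IH: "\<And>U. singular_isotropic m U \<Longrightarrow> card U \<le> CARD('a) ^ m"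
    and W: "singular_isotropic (Suc m) W"
  shows "card W \<le> CARD('a) ^ Suc m"
proof -
  have sW: "VS.subspace W" and fW: "finite W"
    using W finite_singular_isotropic[OF W] by (auto simp: singular_isotropic_def)
  have bound: "card U \<le> CARD('a) ^ m"
    if "singular_isotropic (Suc m) U" "U \<subseteq> perp_pair (Suc m)" for U
    using singular_isotropic_drop_pair[OF m that] IH by metis
  show ?thesis
  proof (cases "\<forall>x\<in>W. x (m+3) = 0")
    case True
    define W0 where "W0 = {x\<in>W. x (m+2) = 0}"
    have "W0 \<subseteq> perp_pair (Suc m)"
      using W True unfolding W0_def singular_isotropic_def perp_pair_def supported_on_def coordspace_def
      by (auto simp: numeral_3_eq_3)
    moreover have "singular_isotropic (Suc m) W0"
      using W subspace_coordinate_zero[OF sW] by (auto simp: W0_def singular_isotropic_def)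
    ultimately have "card W0 \<le> CARD('a) ^ m" by (rule bound[rotated])
    moreover have "card W \<le> CARD('a) * card W0"
      unfolding W0_def by (rule card_le_mult_card_coordinate_zero[OF sW fW])
    ultimately show ?thesis by (simp add: order_trans)
  next
    case False
    then obtain w where w: "w \<in> W" "w (m+3) \<noteq> 0" by blast
    have "pair_e m \<notin> W"
    proof
      assume "pair_e m \<in> W"
      then have "polar (Suc m) (pair_e m) w = 0" using polar_eq_zero_if_singular_isotropic[OF W] w by blast
      then show False using pair_e_facts(4)[OF m] w by simp
    qed
    have "card W = CARD('a) * card {x\<in>W. x (m+3) = 0}"
      using card_eq_mult_card_kernel[where \<phi>="\<lambda>x. x (m+3)", OF sW fW] w by (simp add: vscale_apply)
    also have "card {x\<in>W. x (m+3) = 0} = card (project_perp m W)"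
      using card_project_perp[OF W \<open>pair_e m \<notin> W\<close>] by simp
    also have "\<dots> \<le> CARD('a) ^ m" using bound project_perp_singular_isotropic[OF m W] by blast
    finally show ?thesis by simp
  qed
qed

lemma card_singular_isotropic_le:
  "n \<ge> 2 \<Longrightarrow> singular_isotropic n W \<Longrightarrow> card W \<le> CARD('a) ^ n"
proof (induction n arbitrary: W rule: nat_induct_at_least)
  case base then show ?case using card_singular_isotropic_2_le by blast
next
  case (Suc m) then show ?case using card_singular_isotropic_Suc_le by blast
qed

section \<open>The recursion in \<open>n\<close>\<close>

definition perp_gens :: "nat \<Rightarrow> bool \<Rightarrow> (nat \<Rightarrow> 'a) set set" where
  "perp_gens m b = {U. singular_isotropic (Suc m) U \<and> U \<subseteq> perp_pair (Suc m)
      \<and> card U = CARD('a) ^ m \<and> U \<subseteq> tail (Suc m) b}"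

lemma finite_perp_gens: "finite (perp_gens m b)"
proof -
  have "perp_gens m b \<subseteq> Pow (coordspace (2*Suc m+2))"
    by (auto simp: perp_gens_def singular_isotropic_def)
  then show ?thesis using finite_coordspace finite_subset by blast
qed

lemma card_perp_gens:
  assumes m: "m \<ge> 2"
  shows "card (perp_gens m b) = card (iso_gens m b)"
proof -
  have "bij_betw (\<lambda>U. drop_pair (Suc m) ` U) (perp_gens m b) (iso_gens m b)"
  proof (rule bij_betw_byWitness[where f'="\<lambda>W. insert_pair (Suc m) ` W"])
    show "\<forall>U\<in>perp_gens m b. insert_pair (Suc m) ` drop_pair (Suc m) ` U = U"
      using insert_pair_drop_pair by (force simp: perp_gens_def image_image)
    show "\<forall>W\<in>iso_gens m b. drop_pair (Suc m) ` insert_pair (Suc m) ` W = W"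
      by (simp add: image_image)
    show "(\<lambda>U. drop_pair (Suc m) ` U) ` perp_gens m b \<subseteq> iso_gens m b"
      using singular_isotropic_drop_pair[OF m] tail_drop_pair[OF m]
      by (fastforce simp: perp_gens_def iso_gens_def)
    show "(\<lambda>W. insert_pair (Suc m) ` W) ` iso_gens m b \<subseteq> perp_gens m b"
    proof
      fix U assume "U \<in> (\<lambda>W. insert_pair (Suc m) ` W) ` iso_gens m b"
      then obtain W where W: "W \<in> iso_gens m b" and U: "U = insert_pair (Suc m) ` W" by blast
      have sW: "singular_isotropic m W" "card W = CARD('a) ^ m" "W \<subseteq> tail m b"
        using W by (auto simp: iso_gens_def)
      have "inj_on (insert_pair (Suc m)) W"
        by (rule inj_on_inverseI[where g="drop_pair (Suc m)"]) simp
      moreover have "U \<subseteq> perp_pair (Suc m)"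
        using sW insert_pair_in_perp_pair unfolding U singular_isotropic_def by blast
      moreover from this have "U \<subseteq> coordspace (2*Suc m+2)"
        using perp_pair_subset_coordspace by blast
      moreover have "Q (Suc m) (insert_pair (Suc m) y) = 0" if "y \<in> W" for y
      proof -
        have "y \<in> coordspace (2*m+2)" "Q m y = 0" using sW(1) that by (auto simp: singular_isotropic_def)
        then show ?thesis using Q_drop_pair[OF insert_pair_in_perp_pair m, of y] by simp
      qed
      moreover have "Bmu (Suc m) (insert_pair (Suc m) x) (insert_pair (Suc m) y) = Bmu m x y" for x y
        using Bmu_drop_pair[OF m, of "insert_pair (Suc m) x" "insert_pair (Suc m) y"] by simp
      moreover have "insert_pair (Suc m) y \<in> tail (Suc m) b \<longleftrightarrow> y \<in> tail m b" for y
        using tail_drop_pair[OF m, of "insert_pair (Suc m) y"] by simp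
      ultimately show "U \<in> perp_gens m b"
        using sW subspace_image_linear[OF insert_pair_linear[where n="Suc m"]] perp_pair_subset_coordspace
        unfolding U perp_gens_def singular_isotropic_def by (auto simp: card_image)
    qed
  qed
  then show ?thesis by (rule bij_betw_same_card)
qed

lemma Q_add_pair_e:
  assumes "m \<ge> 2" "u (m+3) = 0"
  shows "Q (Suc m) (vscale c (pair_e m) + u) = Q (Suc m) u"
  using pair_e_facts[OF assms(1)] assms(2) by (simp add: Q_add Q_scale polar_scale)

lemma Bmu_add_pair_e: "m \<ge> 2 \<Longrightarrow> Bmu (Suc m) (vscale c (pair_e m) + u) y = Bmu (Suc m) u y"
  using pair_e_facts by (simp add: Bmu_add Bmu_scale)

lemma adjoin_pair_e_in_iso_gens:
  assumes m: "m \<ge> 2" and U: "U \<in> perp_gens m b"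
  shows "adjoin (pair_e m) U \<in> iso_gens (Suc m) b"
proof -
  have U': "singular_isotropic (Suc m) U" "U \<subseteq> perp_pair (Suc m)" "card U = CARD('a) ^ m"
    "U \<subseteq> tail (Suc m) b"
    using U by (auto simp: perp_gens_def)
  have sU: "VS.subspace U" using U'(1) by (simp add: singular_isotropic_def)
  have "card (adjoin (pair_e m) U) = CARD('a) ^ Suc m"
    using card_adjoin[OF sU] pair_e_facts(7)[OF m] U'(2,3) by auto
  moreover have "adjoin (pair_e m) U \<subseteq> coordspace (2*Suc m+2)"
    using U'(1) pair_e_facts(1)[OF m]
    by (intro adjoin_subset subspace_coordspace) (auto simp: singular_isotropic_def)
  moreover have "adjoin (pair_e m) U \<subseteq> tail (Suc m) b"
    using U'(4) pair_e_facts(6)[OF m] by (intro adjoin_subset subspace_tail) auto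
  moreover have "Q (Suc m) x = 0" if x: "x \<in> adjoin (pair_e m) U" for x
  proof -
    obtain c u where "u \<in> U" "x = vscale c (pair_e m) + u" using x by (auto simp: mem_adjoin_iff)
    moreover have "u (m+3) = 0" using \<open>u \<in> U\<close> U'(2) perp_pair_coordinates by blast
    ultimately show ?thesis using U'(1) Q_add_pair_e[OF m] by (simp add: singular_isotropic_def)
  qed
  moreover have "\<forall>x\<in>adjoin (pair_e m) U. \<forall>y\<in>adjoin (pair_e m) U. Bmu (Suc m) x y = 0"
    using U'(1) Bmu_add_pair_e[OF m] Bmu_sym
    by (auto simp: mem_adjoin_iff singular_isotropic_def)
  ultimately show ?thesis using subspace_adjoin[OF sU]
    by (simp add: iso_gens_def singular_isotropic_def)
qed

lemma coordinate_zero_in_perp_gens: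
  assumes m: "m \<ge> 2" and W: "W \<in> iso_gens (Suc m) b" "pair_e m \<in> W"
  shows "{x\<in>W. x (m+2) = 0} \<in> perp_gens m b"
proof -
  have T: "singular_isotropic (Suc m) W" and cW: "card W = CARD('a) ^ Suc m"
    and zW: "W \<subseteq> tail (Suc m) b"
    using W by (auto simp: iso_gens_def)
  have sW: "VS.subspace W" using T by (simp add: singular_isotropic_def)
  have perp: "x (m+3) = 0" if "x \<in> W" for x
    using polar_eq_zero_if_singular_isotropic[OF T W(2) that] pair_e_facts(4)[OF m] by simp
  have "card W = CARD('a) * card {x\<in>W. x (m+2) = 0}"
    by (rule card_eq_mult_card_kernel[OF sW finite_singular_isotropic[OF T] _ _ W(2)])
       (simp_all add: vscale_apply unit_vec_def)
  then have "card {x\<in>W. x (m+2) = 0} = CARD('a) ^ m" using cW by simp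
  moreover have "{x\<in>W. x (m+2) = 0} \<subseteq> perp_pair (Suc m)"
    using T perp unfolding singular_isotropic_def perp_pair_def supported_on_def coordspace_def
    by (auto simp: numeral_3_eq_3)
  ultimately show ?thesis
    using T zW subspace_coordinate_zero[OF sW] by (auto simp: perp_gens_def singular_isotropic_def)
qed

lemma card_iso_gens_containing_pair_e:
  assumes m: "m \<ge> 2"
  shows "card {W \<in> iso_gens (Suc m) b. pair_e m \<in> W} = card (iso_gens m b)"
proof -
  have "bij_betw (adjoin (pair_e m)) (perp_gens m b) {W \<in> iso_gens (Suc m) b. pair_e m \<in> W}"
  proof (rule bij_betw_byWitness[where f'="\<lambda>W. {x\<in>W. x (m+2) = 0}"])
    show "\<forall>U\<in>perp_gens m b. {x \<in> adjoin (pair_e m) U. x (m+2) = 0} = U"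
      using perp_pair_coordinates by (intro ballI coordinate_zero_adjoin_unit_vec) (auto simp: perp_gens_def)
    show "\<forall>W\<in>{W \<in> iso_gens (Suc m) b. pair_e m \<in> W}. adjoin (pair_e m) {x \<in> W. x (m+2) = 0} = W"
    proof
      fix W assume "W \<in> {W \<in> iso_gens (Suc m) b. pair_e m \<in> W}"
      then have "VS.subspace W" "pair_e m \<in> W" by (auto simp: iso_gens_def singular_isotropic_def)
      then show "adjoin (pair_e m) {x \<in> W. x (m+2) = 0} = W" by (rule adjoin_unit_vec_coordinate_zero)
    qed
    show "adjoin (pair_e m) ` perp_gens m b \<subseteq> {W \<in> iso_gens (Suc m) b. pair_e m \<in> W}"
      using adjoin_pair_e_in_iso_gens[OF m] mem_adjoin_self[OF VS.subspace_0]
      by (auto simp: perp_gens_def singular_isotropic_def)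
    show "(\<lambda>W. {x\<in>W. x (m+2) = 0}) ` {W \<in> iso_gens (Suc m) b. pair_e m \<in> W} \<subseteq> perp_gens m b"
      using coordinate_zero_in_perp_gens[OF m] by blast
  qed
  then have "card (perp_gens m b) = card {W \<in> iso_gens (Suc m) b. pair_e m \<in> W}"
    by (rule bij_betw_same_card)
  then show ?thesis using card_perp_gens[OF m] by simp
qed

definition avoiding_gens :: "nat \<Rightarrow> bool \<Rightarrow> (nat \<Rightarrow> 'a) set set" where
  "avoiding_gens m b = {W \<in> iso_gens (Suc m) b. pair_e m \<notin> W}"

definition apex_set :: "nat \<Rightarrow> bool \<Rightarrow> (nat \<Rightarrow> 'a) set \<Rightarrow> (nat \<Rightarrow> 'a) set" where
  "apex_set m b U = {w \<in> coordspace (2*Suc m+2). w (m+3) = 1 \<and> Q (Suc m) w = 0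
     \<and> (\<forall>u\<in>U. Bmu (Suc m) w u = 0) \<and> w \<in> tail (Suc m) b}"

text \<open>Given \<open>w\<close> with \<open>w (m+3) = 1\<close>, \<open>lift m w\<close> moves a vector of \<open>perp_pair (Suc m)\<close> along
  \<open>pair_e m\<close> into \<open>w\<^sup>\<perp>\<close>; \<open>cone m w U\<close> is then the unique generator through \<open>w\<close> whose
  \<open>project_perp\<close> is \<open>U\<close>.\<close>

definition lift :: "nat \<Rightarrow> (nat \<Rightarrow> 'a) \<Rightarrow> (nat \<Rightarrow> 'a) \<Rightarrow> (nat \<Rightarrow> 'a)" where
  "lift m w u = u + vscale (polar (Suc m) w u) (pair_e m)"

definition cone :: "nat \<Rightarrow> (nat \<Rightarrow> 'a) \<Rightarrow> (nat \<Rightarrow> 'a) set \<Rightarrow> (nat \<Rightarrow> 'a) set" where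
  "cone m w U = adjoin w (lift m w ` U)"

lemma lift_linear: "lift m w (x + y) = lift m w x + lift m w y"
    "lift m w (vscale c x) = vscale c (lift m w x)"
  by (simp_all add: lift_def polar_add polar_scale fun_eq_iff vscale_apply algebra_simps)

lemma lift_coordinates:
  "u (m+3) = 0 \<Longrightarrow> lift m w u (m+3) = 0"
  "u (m+2) = 0 \<Longrightarrow> (lift m w u)(m+2 := 0) = u"
  by (auto simp: lift_def vscale_apply unit_vec_def fun_eq_iff)

lemma clear_lift: "u \<in> perp_pair (Suc m) \<Longrightarrow> (lift m w u)(m+2 := 0) = u"
  using perp_pair_coordinates lift_coordinates(2) by blast

lemma Q_lift: "m \<ge> 2 \<Longrightarrow> u (m+3) = 0 \<Longrightarrow> Q (Suc m) (lift m w u) = Q (Suc m) u"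
  unfolding lift_def by (subst add.commute) (rule Q_add_pair_e)

lemma polar_lift: "m \<ge> 2 \<Longrightarrow> w (m+3) = 1 \<Longrightarrow> polar (Suc m) w (lift m w u) = 0"
  using pair_e_facts(5) by (simp add: lift_def polar_add polar_scale)

lemma Bmu_lift:
  assumes "m \<ge> 2"
  shows "Bmu (Suc m) (lift m w u) y = Bmu (Suc m) u y" "Bmu (Suc m) y (lift m w u) = Bmu (Suc m) y u"
  using Bmu_add_pair_e[OF assms] Bmu_sym unfolding lift_def by (metis add.commute)+

lemma lift_clear_coordinate:
  assumes m: "m \<ge> 2" and W: "singular_isotropic (Suc m) W"
    and w: "w \<in> W" "w (m+3) = 1" and x: "x \<in> W"
  shows "lift m w (x(m+2 := 0)) = x"
proof -
  have "polar (Suc m) w (x(m+2 := 0)) + x (m+2) = polar (Suc m) w x"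
    using clear_coordinate_decomp[of x "m+2"] pair_e_facts(5)[OF m] w(2)
    by (metis polar_add(2) polar_scale(2) mult.right_neutral)
  also have "\<dots> = 0" using polar_eq_zero_if_singular_isotropic[OF W w(1) x] .
  finally have "polar (Suc m) w (x(m+2 := 0)) = x (m+2)" by (rule eq_if_add_eq_zero)
  then show ?thesis using clear_coordinate_decomp[of x "m+2"] by (simp add: lift_def)
qed

lemma
  assumes m: "m \<ge> 2" and U: "U \<in> perp_gens m b" and w: "w \<in> apex_set m b U"
  shows cone_coordinate_zero: "{x \<in> cone m w U. x (m+3) = 0} = lift m w ` U"
    and card_cone: "card (cone m w U) = CARD('a) ^ Suc m"
proof -
  have U': "singular_isotropic (Suc m) U" "U \<subseteq> perp_pair (Suc m)" "card U = CARD('a) ^ m"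
    using U by (auto simp: perp_gens_def)
  have u0: "u (m+2) = 0" "u (m+3) = 0" if "u \<in> U" for u
    using that U'(2) perp_pair_coordinates by blast+
  have w1: "w (m+3) = 1" using w by (simp add: apex_set_def)
  have lift3: "lift m w u (m+3) = 0" if "u \<in> U" for u
    using u0(2)[OF that] lift_coordinates(1)[of u m w] by blast
  show "{x \<in> cone m w U. x (m+3) = 0} = lift m w ` U"
  proof
    show "{x \<in> cone m w U. x (m+3) = 0} \<subseteq> lift m w ` U"
    proof
      fix x assume x: "x \<in> {x \<in> cone m w U. x (m+3) = 0}"
      then obtain c u where cu: "u \<in> U" "x = vscale c w + lift m w u"
        by (auto simp: cone_def mem_adjoin_iff)
      then have "c = 0" using x w1 lift3[OF cu(1)] by (simp add: vscale_apply)
      then show "x \<in> lift m w ` U" using cu by (simp add: VS.scale_zero_left)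
    qed
    show "lift m w ` U \<subseteq> {x \<in> cone m w U. x (m+3) = 0}"
      using subset_adjoin[of "lift m w ` U" w] lift3 unfolding cone_def by blast
  qed
  have "inj_on (lift m w) U"
    by (rule inj_on_inverseI[where g="\<lambda>x. x(m+2 := 0)"]) (use U'(2) clear_lift in blast)
  then have "card (lift m w ` U) = CARD('a) ^ m" using U'(3) by (simp add: card_image)
  moreover have "VS.subspace (lift m w ` U)"
    using U'(1) by (intro subspace_image_linear lift_linear) (simp add: singular_isotropic_def)
  moreover have "w \<notin> lift m w ` U" using w1 lift3 by fastforce
  ultimately show "card (cone m w U) = CARD('a) ^ Suc m" by (simp add: cone_def card_adjoin)
qed

lemma mem_cone: "VS.subspace U \<Longrightarrow> w \<in> cone m w U"
  unfolding cone_def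
  by (rule mem_adjoin_self, rule image_eqI[of _ _ 0]) (simp_all add: lift_def VS.subspace_0)

lemma pair_e_notin_cone:
  assumes m: "m \<ge> 2" and U: "U \<in> perp_gens m b" and w: "w \<in> apex_set m b U"
  shows "pair_e m \<notin> cone m w U"
proof
  assume "pair_e m \<in> cone m w U"
  moreover have "pair_e m (m+3) = 0" by (simp add: unit_vec_def)
  ultimately have "pair_e m \<in> lift m w ` U" using cone_coordinate_zero[OF m U w] by blast
  then obtain u where u: "u \<in> U" "pair_e m = lift m w u" by blast
  then have "u = (pair_e m)(m+2 := 0)" using clear_lift U by (auto simp: perp_gens_def)
  then have "u = 0" by (simp add: unit_vec_def fun_eq_iff)
  then have "pair_e m = 0" using u(2) by (simp add: lift_def VS.scale_zero_left)
  then have "pair_e m (m+2) = (0 :: nat \<Rightarrow> 'a) (m+2)" by simp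
  then show False by (simp add: unit_vec_def)
qed

lemma cone_in_avoiding_gens:
  assumes m: "m \<ge> 2" and U: "U \<in> perp_gens m b" and w: "w \<in> apex_set m b U"
  shows "cone m w U \<in> avoiding_gens m b"
proof -
  have U': "singular_isotropic (Suc m) U" "U \<subseteq> perp_pair (Suc m)" "U \<subseteq> tail (Suc m) b"
    using U by (auto simp: perp_gens_def)
  have w': "w \<in> coordspace (2*Suc m+2)" "w (m+3) = 1" "Q (Suc m) w = 0"
    "\<forall>u\<in>U. Bmu (Suc m) w u = 0" "w \<in> tail (Suc m) b"
    using w by (auto simp: apex_set_def)
  have sU: "VS.subspace U" using U'(1) by (simp add: singular_isotropic_def)
  have u3: "u (m+3) = 0" if "u \<in> U" for u using that U'(2) perp_pair_coordinates by blast
  have lift_in: "lift m w u \<in> S"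
    if "VS.subspace S" "pair_e m \<in> S" "u \<in> S" for S u
    using that by (simp add: lift_def VS.subspace_add VS.subspace_scale)
  have "cone m w U \<subseteq> coordspace (2*Suc m+2)"
    using U'(1) w'(1) pair_e_facts(1)[OF m] subspace_coordspace unfolding cone_def
    by (intro adjoin_subset) (auto intro!: lift_in simp: singular_isotropic_def)
  moreover have "cone m w U \<subseteq> tail (Suc m) b"
    using U'(3) w'(5) pair_e_facts(6)[OF m] subspace_tail unfolding cone_def
    by (intro adjoin_subset) (auto intro!: lift_in)
  moreover have "Q (Suc m) x = 0" if "x \<in> cone m w U" for x
    using that w' U'(1) Q_lift[OF m] polar_lift[OF m] u3
    by (auto simp: cone_def mem_adjoin_iff Q_add Q_scale polar_scale singular_isotropic_def)
  moreover have "Bmu (Suc m) x y = 0" if x: "x \<in> cone m w U" and y: "y \<in> cone m w U" for x y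
  proof -
    obtain c u where u: "u \<in> U" "x = vscale c w + lift m w u"
      using x by (auto simp: cone_def mem_adjoin_iff)
    obtain c' u' where u': "u' \<in> U" "y = vscale c' w + lift m w u'"
      using y by (auto simp: cone_def mem_adjoin_iff)
    have "Bmu (Suc m) w u' = 0" "Bmu (Suc m) u w = 0" "Bmu (Suc m) u u' = 0"
      using w'(4) U'(1) u(1) u'(1) Bmu_sym[of "Suc m" u w] by (auto simp: singular_isotropic_def)
    then show ?thesis unfolding u u' by (simp add: Bmu_add Bmu_scale Bmu_lift[OF m])
  qed
  moreover have "pair_e m \<notin> cone m w U" by (rule pair_e_notin_cone[OF m U w])
  moreover have "VS.subspace (cone m w U)"
    unfolding cone_def by (intro subspace_adjoin subspace_image_linear[OF lift_linear sU])
  ultimately show ?thesis using card_cone[OF m U w]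
    unfolding avoiding_gens_def iso_gens_def singular_isotropic_def mem_Collect_eq by blast
qed

lemma project_perp_cone:
  assumes m: "m \<ge> 2" and U: "U \<in> perp_gens m b" and w: "w \<in> apex_set m b U"
  shows "project_perp m (cone m w U) = U"
proof -
  have "(lift m w u)(m+2 := 0) = u" if "u \<in> U" for u
    using that U clear_lift by (auto simp: perp_gens_def)
  then have "(\<lambda>u. (lift m w u)(m+2 := 0)) ` U = id ` U"
    by (intro image_cong) simp_all
  then show ?thesis
    unfolding project_perp_def cone_coordinate_zero[OF m U w] image_image by simp
qed

lemma
  assumes m: "m \<ge> 2" and W: "W \<in> avoiding_gens m b" and w: "w \<in> W" "w (m+3) = 1"
  shows project_perp_in_perp_gens: "project_perp m W \<in> perp_gens m b"
    and apex_in_apex_set: "w \<in> apex_set m b (project_perp m W)"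
    and cone_project_perp: "cone m w (project_perp m W) = W"
proof -
  have T: "singular_isotropic (Suc m) W" and cW: "card W = CARD('a) ^ Suc m"
    and zW: "W \<subseteq> tail (Suc m) b" and eW: "pair_e m \<notin> W"
    using W by (auto simp: avoiding_gens_def iso_gens_def)
  have sW: "VS.subspace W" using T by (simp add: singular_isotropic_def)
  let ?K = "{x\<in>W. x (m+3) = 0}"
  have "card W = CARD('a) * card ?K"
    using card_eq_mult_card_kernel[OF sW finite_singular_isotropic[OF T] _ _ w(1)] w(2)
    by (simp add: vscale_apply)
  then have "card (project_perp m W) = CARD('a) ^ m" using cW card_project_perp[OF T eW] by simp
  moreover have "project_perp m W \<subseteq> tail (Suc m) b"
    using zW m by (auto simp: project_perp_def tail_def tail_zero_def)
  ultimately show "project_perp m W \<in> perp_gens m b"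
    using project_perp_singular_isotropic[OF m T] by (simp add: perp_gens_def)
  have "Bmu (Suc m) w u = 0" if "u \<in> project_perp m W" for u
    using that T w(1) m by (auto simp: project_perp_def singular_isotropic_def Bmu_def)
  then show "w \<in> apex_set m b (project_perp m W)"
    using T w zW by (auto simp: apex_set_def singular_isotropic_def)
  have "(\<lambda>x. lift m w (x(m+2 := 0))) ` ?K = id ` ?K"
    using lift_clear_coordinate[OF m T w] by (intro image_cong) auto
  then have "lift m w ` project_perp m W = ?K"
    unfolding project_perp_def image_image by simp
  moreover have "adjoin w ?K = W"
  proof
    show "adjoin w ?K \<subseteq> W" using sW w(1) by (intro adjoin_subset) auto
    show "W \<subseteq> adjoin w ?K"
    proof
      fix y assume y: "y \<in> W"
      have "y - vscale (y (m+3)) w \<in> ?K"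
        using y w VS.subspace_diff[OF sW y VS.subspace_scale[OF sW w(1)]] by (simp add: vscale_apply)
      then show "y \<in> adjoin w ?K" unfolding mem_adjoin_iff by (intro exI[of _ "y (m+3)"]) force
    qed
  qed
  ultimately show "cone m w (project_perp m W) = W" by (simp add: cone_def)
qed

lemma card_level_set_avoiding_gens:
  assumes m: "m \<ge> 2" and W: "W \<in> avoiding_gens m b"
  shows "card {w\<in>W. w (m+3) = 1} = CARD('a) ^ m"
proof -
  have T: "singular_isotropic (Suc m) W" and cW: "card W = CARD('a) ^ Suc m"
    and eW: "pair_e m \<notin> W"
    using W by (auto simp: avoiding_gens_def iso_gens_def)
  have sW: "VS.subspace W" and fW: "finite W"
    using T finite_singular_isotropic[OF T] by (auto simp: singular_isotropic_def)
  have "\<exists>t\<in>W. t (m+3) \<noteq> 0"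
  proof (rule ccontr)
    assume "\<not> (\<exists>t\<in>W. t (m+3) \<noteq> 0)"
    then have perp: "\<forall>x\<in>W. x (m+3) = 0" by blast
    have "singular_isotropic (Suc m) (adjoin (pair_e m) W)"
    proof -
      have "adjoin (pair_e m) W \<subseteq> coordspace (2*Suc m+2)"
        using T pair_e_facts(1)[OF m] by (intro adjoin_subset subspace_coordspace) (auto simp: singular_isotropic_def)
      moreover have "\<forall>x\<in>adjoin (pair_e m) W. Q (Suc m) x = 0"
        using Q_add_pair_e[OF m] perp T by (auto simp: mem_adjoin_iff singular_isotropic_def)
      moreover have "\<forall>x\<in>adjoin (pair_e m) W. \<forall>y\<in>adjoin (pair_e m) W. Bmu (Suc m) x y = 0"
        using T Bmu_add_pair_e[OF m] Bmu_sym[of "Suc m" _ "vscale _ (pair_e m) + _"]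
        by (auto simp: mem_adjoin_iff singular_isotropic_def)
      ultimately show ?thesis using subspace_adjoin[OF sW] by (simp add: singular_isotropic_def)
    qed
    then have "card (adjoin (pair_e m) W) \<le> CARD('a) ^ Suc m"
      using m by (intro card_singular_isotropic_le) auto
    then show False using card_adjoin[OF sW eW] cW card_UNIV_field_ge_two[where 'a='a] by simp
  qed
  then obtain t where t: "t \<in> W" "t (m+3) \<noteq> 0" by blast
  have coord_linear: "\<And>x y. (x + y) (m+3) = x (m+3) + y (m+3)" "\<And>c x. vscale c x (m+3) = c * x (m+3)"
    by (simp_all add: vscale_apply)
  show ?thesis
    using card_eq_mult_card_kernel[OF sW fW coord_linear t] card_level_set[OF sW fW coord_linear t, of 1] cW
    by simp
qed

lemma card_avoiding_gens_double_count:
  assumes m: "m \<ge> 2"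
  shows "card (avoiding_gens m b) * CARD('a) ^ m = (\<Sum>U\<in>perp_gens m b. card (apex_set m b U))"
proof -
  let ?PW = "Sigma (avoiding_gens m b) (\<lambda>W. {w\<in>W. w (m+3) = 1})"
  let ?PU = "Sigma (perp_gens m b) (apex_set m b)"
  have "bij_betw (\<lambda>(W, w). (project_perp m W, w)) ?PW ?PU"
  proof (rule bij_betw_byWitness[where f'="\<lambda>(U, w). (cone m w U, w)"])
    show "\<forall>p\<in>?PW. (\<lambda>(U, w). (cone m w U, w)) ((\<lambda>(W, w). (project_perp m W, w)) p) = p"
      using cone_project_perp[OF m] by auto
    show "\<forall>p\<in>?PU. (\<lambda>(W, w). (project_perp m W, w)) ((\<lambda>(U, w). (cone m w U, w)) p) = p"
      using project_perp_cone[OF m] by auto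
    show "(\<lambda>(W, w). (project_perp m W, w)) ` ?PW \<subseteq> ?PU"
      using project_perp_in_perp_gens[OF m] apex_in_apex_set[OF m] by auto
    show "(\<lambda>(U, w). (cone m w U, w)) ` ?PU \<subseteq> ?PW"
      using cone_in_avoiding_gens[OF m] mem_cone by (auto simp: apex_set_def perp_gens_def singular_isotropic_def)
  qed
  then have "card ?PW = card ?PU" by (rule bij_betw_same_card)
  moreover have "card ?PW = card (avoiding_gens m b) * CARD('a) ^ m"
  proof -
    have "finite (avoiding_gens m b)" using finite_iso_gens by (simp add: avoiding_gens_def)
    then have "card ?PW = (\<Sum>W\<in>avoiding_gens m b. card {w\<in>W. w (m+3) = 1})"
      by (rule card_SigmaI) (auto simp: avoiding_gens_def iso_gens_def dest: finite_singular_isotropic)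
    then show ?thesis using card_level_set_avoiding_gens[OF m] by simp
  qed
  moreover have "card ?PU = (\<Sum>U\<in>perp_gens m b. card (apex_set m b U))"
    using finite_perp_gens
    by (rule card_SigmaI) (auto simp: apex_set_def intro: finite_subset[OF _ finite_coordspace])
  ultimately show ?thesis by simp
qed

definition apex_base :: "nat \<Rightarrow> bool \<Rightarrow> (nat \<Rightarrow> 'a) set \<Rightarrow> (nat \<Rightarrow> 'a) set" where
  "apex_base m b U = {v \<in> perp_pair (Suc m). (\<forall>u\<in>U. Bmu (Suc m) v u = 0) \<and> v \<in> tail (Suc m) b}"

lemma Q_fill_pair:
  assumes m: "m \<ge> 2" and v: "v (m+2) = 0" "v (m+3) = 0"
  shows "Q (Suc m) (v(m+2 := a, m+3 := 1)) = Q (Suc m) v + a"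
proof -
  have eq: "v(m+2 := a, m+3 := 1) = (v + vscale a (pair_e m)) + pair_f m"
    using v by (auto simp: fun_eq_iff vscale_apply unit_vec_def)
  have "Q (Suc m) (v + vscale a (pair_e m)) = Q (Suc m) v"
    using pair_e_facts[OF m] v by (simp add: Q_add Q_scale polar_scale)
  moreover have "polar (Suc m) (v + vscale a (pair_e m)) (pair_f m) = a"
    using pair_f_facts[OF m] v by (simp add: polar_add polar_scale unit_vec_def)
  ultimately show ?thesis unfolding eq using pair_f_facts[OF m] by (simp add: Q_add)
qed

text \<open>An apex \<open>w\<close> is determined by its component in \<open>perp_pair (Suc m)\<close>: \<open>w (m+3) = 1\<close> is
  prescribed and \<open>Q w = 0\<close> then fixes \<open>w (m+2)\<close>.\<close>

lemma card_apex_set_eq_card_apex_base: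
  assumes m: "m \<ge> 2"
  shows "card (apex_set m b U) = card (apex_base m b U)"
proof -
  have "bij_betw (\<lambda>w. w(m+2 := 0, m+3 := 0)) (apex_set m b U) (apex_base m b U)"
  proof (rule bij_betw_byWitness[where f'="\<lambda>v. v(m+2 := Q (Suc m) v, m+3 := 1)"])
    show "\<forall>w\<in>apex_set m b U. (w(m+2 := 0, m+3 := 0))(m+2 := Q (Suc m) (w(m+2 := 0, m+3 := 0)), m+3 := 1) = w"
    proof
      fix w assume w: "w \<in> apex_set m b U"
      let ?v = "w(m+2 := 0, m+3 := 0)"
      have "?v(m+2 := w (m+2), m+3 := 1) = w" using w by (auto simp: apex_set_def fun_eq_iff)
      moreover have "Q (Suc m) (?v(m+2 := w (m+2), m+3 := 1)) = Q (Suc m) ?v + w (m+2)"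
        by (rule Q_fill_pair[OF m]) auto
      ultimately have "Q (Suc m) ?v = w (m+2)" using w eq_if_add_eq_zero by (auto simp: apex_set_def)
      then show "?v(m+2 := Q (Suc m) ?v, m+3 := 1) = w" using w by (auto simp: apex_set_def fun_eq_iff)
    qed
    show "\<forall>v\<in>apex_base m b U. (v(m+2 := Q (Suc m) v, m+3 := 1))(m+2 := 0, m+3 := 0) = v"
      using perp_pair_coordinates by (auto simp: apex_base_def fun_eq_iff)
    show "(\<lambda>w. w(m+2 := 0, m+3 := 0)) ` apex_set m b U \<subseteq> apex_base m b U"
      using m by (auto simp: apex_set_def apex_base_def perp_pair_def supported_on_def coordspace_def
          Bmu_def tail_def tail_zero_def)
    show "(\<lambda>v. v(m+2 := Q (Suc m) v, m+3 := 1)) ` apex_base m b U \<subseteq> apex_set m b U"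
    proof
      fix w assume "w \<in> (\<lambda>v. v(m+2 := Q (Suc m) v, m+3 := 1)) ` apex_base m b U"
      then obtain v where v: "v \<in> apex_base m b U" "w = v(m+2 := Q (Suc m) v, m+3 := 1)" by blast
      have vc: "v (m+2) = 0" "v (m+3) = 0" "v \<in> coordspace (2*Suc m+2)"
        using v perp_pair_coordinates by (auto simp: apex_base_def)
      have "Q (Suc m) w = 0" using Q_fill_pair[OF m vc(1,2)] v(2) by simp
      moreover have "w \<in> coordspace (2*Suc m+2)" using vc(3) v(2) by (auto simp: coordspace_def)
      ultimately show "w \<in> apex_set m b U"
        using v m by (auto simp: apex_base_def apex_set_def Bmu_def tail_def tail_zero_def)
    qed
  qed
  then show ?thesis by (rule bij_betw_same_card)
qed

lemma Bmu_zero_if_Bmu_zero_outside_tail_zero: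
  assumes "u0 \<notin> tail_zero n" "Bmu n u0 u = 0" "Bmu n v u0 = 0"
  shows "Bmu n v u = 0"
proof -
  let ?a = "u0 (2*n)" and ?b = "u0 (2*n+1)"
  have ab: "?a \<noteq> 0 \<or> ?b \<noteq> 0" using assms(1) by (auto simp: tail_zero_def)
  have c: "?a * u (2*n+1) + ?b * u (2*n) = 0" using assms(2) by (simp add: Bmu_def)
  have v: "v (2*n) * ?b + v (2*n+1) * ?a = 0" using assms(3) by (simp add: Bmu_def)
  show ?thesis
  proof (cases "?a = 0")
    case True
    then have "u (2*n) = 0" "v (2*n) = 0" using ab c v by simp_all
    then show ?thesis by (simp add: Bmu_def)
  next
    case False
    then have "u (2*n+1) = ?b * u (2*n) / ?a" using c eq_if_add_eq_zero
      by (metis mult.commute nonzero_eq_divide_eq mult.left_commute)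
    then have "Bmu n v u = (u (2*n) / ?a) * (v (2*n) * ?b + v (2*n+1) * ?a)"
      using False by (simp add: Bmu_def field_simps)
    then show ?thesis using v by simp
  qed
qed

lemma card_perp_pair_tail_zero:
  assumes m: "m \<ge> 2"
  shows "card (perp_pair (Suc m) \<inter> tail_zero (Suc m)) = CARD('a) ^ (2*m)"
proof -
  let ?S = "{1..2*Suc m+2} - {Suc m+1, Suc m+2, 2*Suc m, 2*Suc m+1}"
  have "perp_pair (Suc m) \<inter> tail_zero (Suc m) = supported_on ?S"
    by (auto simp: perp_pair_def tail_zero_def supported_on_def)
  moreover have "card {Suc m+1, Suc m+2, 2*Suc m, 2*Suc m+1} = 4" using m by simp
  then have "card ?S = 2*m" by (subst card_Diff_subset) auto
  ultimately show ?thesis by (simp add: card_supported_on)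
qed

lemma card_apex_base:
  assumes m: "m \<ge> 2" and U: "\<forall>x\<in>U. \<forall>y\<in>U. Bmu (Suc m) x y = 0"
  shows "card (apex_base m b U) = CARD('a) ^ m *
    (if b then CARD('a) ^ m else if U \<subseteq> tail_zero (Suc m) then CARD('a) ^ (m+2) else CARD('a) ^ (m+1))"
proof -
  have "card (apex_base m b U) =
    (if b then CARD('a) ^ (2*m) else if U \<subseteq> tail_zero (Suc m) then CARD('a) ^ (2*m+2) else CARD('a) ^ (2*m+1))"
  proof (cases "b \<or> U \<subseteq> tail_zero (Suc m)")
    case True
    then have "apex_base m b U = (if b then perp_pair (Suc m) \<inter> tail_zero (Suc m) else perp_pair (Suc m))"
      by (auto simp: apex_base_def tail_def tail_zero_def Bmu_def)
    then show ?thesis using card_perp_pair_tail_zero[OF m] card_perp_pair True by auto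
  next
    case False
    then obtain u0 where u0: "u0 \<in> U" "u0 \<notin> tail_zero (Suc m)" by blast
    have "apex_base m b U = {v\<in>perp_pair (Suc m). Bmu (Suc m) v u0 = 0}"
      using False u0 U Bmu_zero_if_Bmu_zero_outside_tail_zero[OF u0(2)] by (auto simp: apex_base_def tail_def)
    moreover define t :: "nat \<Rightarrow> 'a" where
      "t = (if u0 (2*Suc m+1) \<noteq> 0 then unit_vec (2*Suc m) else unit_vec (2*Suc m+1))"
    have "t \<in> perp_pair (Suc m)" using m by (auto simp: t_def perp_pair_def supported_on_def unit_vec_def)
    moreover have "Bmu (Suc m) t u0 \<noteq> 0" using u0(2) by (auto simp: t_def tail_zero_def Bmu_def unit_vec_def)
    ultimately have "card (perp_pair (Suc m)) = CARD('a) * card (apex_base m b U)"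
      using card_eq_mult_card_kernel[OF subspace_perp_pair finite_perp_pair, where \<phi>="\<lambda>v. Bmu (Suc m) v u0"]
      by (simp add: Bmu_add Bmu_scale)
    then show ?thesis using card_perp_pair False by simp
  qed
  then show ?thesis by (simp add: power_add mult_2)
qed

lemma card_avoiding_gens:
  assumes m: "m \<ge> 2"
  shows "card (avoiding_gens m b) = (\<Sum>U\<in>perp_gens m b.
    if b then CARD('a) ^ m else if U \<subseteq> tail_zero (Suc m) then CARD('a) ^ (m+2) else CARD('a) ^ (m+1))"
  (is "_ = (\<Sum>U\<in>perp_gens m b. ?w U)")
proof -
  have "card (avoiding_gens m b) * CARD('a) ^ m = (\<Sum>U\<in>perp_gens m b. CARD('a) ^ m * ?w U)"
    using card_avoiding_gens_double_count[OF m] card_apex_set_eq_card_apex_base[OF m] card_apex_base[OF m]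
    by (auto simp: perp_gens_def singular_isotropic_def intro!: sum.cong)
  also have "\<dots> = (\<Sum>U\<in>perp_gens m b. ?w U) * CARD('a) ^ m"
    by (simp add: sum_distrib_left mult.commute)
  finally show ?thesis using card_UNIV_field_ge_two[where 'a='a] by simp
qed

lemma card_iso_gens_Suc:
  assumes m: "m \<ge> 2"
  shows "card (iso_gens (Suc m) b) = card (iso_gens m b) + card (avoiding_gens m b)"
proof -
  have "iso_gens (Suc m) b = {W \<in> iso_gens (Suc m) b. pair_e m \<in> W} \<union> avoiding_gens m b"
    "{W \<in> iso_gens (Suc m) b. pair_e m \<in> W} \<inter> avoiding_gens m b = {}"
    by (auto simp: avoiding_gens_def)
  then have "card (iso_gens (Suc m) b) = card {W \<in> iso_gens (Suc m) b. pair_e m \<in> W} + card (avoiding_gens m b)"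
    using finite_iso_gens by (metis card_Un_disjoint finite_Un)
  then show ?thesis using card_iso_gens_containing_pair_e[OF m] by simp
qed

lemma card_iso_gens_Suc_True:
  assumes m: "m \<ge> 2"
  shows "card (iso_gens (Suc m) True) = (CARD('a) ^ m + 1) * card (iso_gens m True)"
  using card_iso_gens_Suc[OF m] card_avoiding_gens[OF m] card_perp_gens[OF m] by simp

lemma card_iso_gens_Suc_False:
  assumes m: "m \<ge> 2"
  shows "card (iso_gens (Suc m) False) + CARD('a) ^ (m+1) * card (iso_gens m True)
     = (CARD('a) ^ (m+1) + 1) * card (iso_gens m False) + CARD('a) ^ (m+2) * card (iso_gens m True)"
proof -
  let ?A = "{U \<in> perp_gens m False. U \<subseteq> tail_zero (Suc m)}"
    and ?B = "{U \<in> perp_gens m False. \<not> U \<subseteq> tail_zero (Suc m)}"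
  have "perp_gens m True = ?A" by (auto simp: perp_gens_def tail_def)
  then have A: "card ?A = card (iso_gens m True)" using card_perp_gens[OF m] by metis
  have "card ?A + card ?B = card (perp_gens m False)"
    using finite_perp_gens by (subst card_Un_disjoint[symmetric]) (auto intro: arg_cong[where f=card])
  then have AB: "card ?A + card ?B = card (iso_gens m False)" using card_perp_gens[OF m] by simp
  have "card (avoiding_gens m False) = card ?A * CARD('a) ^ (m+2) + card ?B * CARD('a) ^ (m+1)"
    using card_avoiding_gens[OF m, of False]
    by (simp add: sum.If_cases[OF finite_perp_gens] Int_def Collect_conj_eq[symmetric] Compl_eq)
  then show ?thesis using card_iso_gens_Suc[OF m, of False] A AB[symmetric] by (simp add: algebra_simps)
qed

section \<open>The case \<open>n = 2\<close>\<close>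

lemma card_solve_coordinate:
  fixes F :: "(nat \<Rightarrow> 'a) \<Rightarrow> 'a"
  assumes T: "j \<notin> T" "j' \<in> T"
    and F: "\<And>w. F w = F (w(j := 0)) + w j * w j'"
  shows "card {w \<in> supported_on (insert j T). w j' \<noteq> 0 \<and> F w = 0}
    = card {w \<in> supported_on T. w j' \<noteq> (0::'a)}"
proof -
  have "bij_betw (\<lambda>w. w(j := 0)) {w \<in> supported_on (insert j T). w j' \<noteq> 0 \<and> F w = 0}
    {w \<in> supported_on T. w j' \<noteq> (0::'a)}"
  proof (rule bij_betw_byWitness[where f'="\<lambda>y. y(j := F y / y j')"])
    show "\<forall>w\<in>{w \<in> supported_on (insert j T). w j' \<noteq> 0 \<and> F w = 0}. (w(j := 0))(j := F (w(j := 0)) / (w(j := 0)) j') = w"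
    proof
      fix w assume w: "w \<in> {w \<in> supported_on (insert j T). w j' \<noteq> 0 \<and> F w = 0}"
      then have "F (w(j := 0)) = w j * w j'" using F[of w] eq_if_add_eq_zero by auto
      then show "(w(j := 0))(j := F (w(j := 0)) / (w(j := 0)) j') = w" using w T by (auto simp: fun_eq_iff)
    qed
    show "\<forall>y\<in>{w \<in> supported_on T. w j' \<noteq> 0}. (y(j := F y / y j'))(j := 0) = y"
      using T(1) by (auto simp: supported_on_def fun_eq_iff)
    show "(\<lambda>w. w(j := 0)) ` {w \<in> supported_on (insert j T). w j' \<noteq> 0 \<and> F w = 0} \<subseteq> {w \<in> supported_on T. w j' \<noteq> 0}"
      using T by (auto simp: supported_on_def split: if_splits)
    show "(\<lambda>y. y(j := F y / y j')) ` {w \<in> supported_on T. w j' \<noteq> 0} \<subseteq> {w \<in> supported_on (insert j T). w j' \<noteq> 0 \<and> F w = 0}"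
    proof
      fix x assume "x \<in> (\<lambda>y. y(j := F y / y j')) ` {w \<in> supported_on T. w j' \<noteq> 0}"
      then obtain y where y: "y \<in> supported_on T" "y j' \<noteq> 0" "x = y(j := F y / y j')" by blast
      have "y j = 0" using y(1) T(1) by (simp add: supported_on_def)
      then have "y(j := 0) = y" by auto
      then have "F x = F y + F y / y j' * y j'" using F[of x] y(3) T by auto
      then have "F x = 0" using y(2) by simp
      then show "x \<in> {w \<in> supported_on (insert j T). w j' \<noteq> 0 \<and> F w = 0}"
        using y T by (auto simp: supported_on_def)
    qed
  qed
  then show ?thesis by (rule bij_betw_same_card)
qed

definition singular_off_tail_2 :: "(nat \<Rightarrow> 'a) set" where
  "singular_off_tail_2 = {w \<in> coordspace 6. Q 2 w = 0 \<and> w \<notin> tail_zero 2}"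

lemma card_singular_off_tail_2: "card singular_off_tail_2 = CARD('a) ^ 5 - CARD('a) ^ 3"
proof -
  let ?q = "CARD('a)"
  define X1 where "X1 = {w \<in> supported_on (insert 3 {1,2,4,5,6}). w 4 \<noteq> 0 \<and> Q 2 w = 0}"
  define X2 where "X2 = {w \<in> supported_on (insert 2 {1,3,5,6}). w 5 \<noteq> 0 \<and> Q 2 w = 0}"
  have "{1..6::nat} = {3,1,2,4,5,6}" by auto
  then have "singular_off_tail_2 = X1 \<union> X2"
    unfolding singular_off_tail_2_def X1_def X2_def coordspace_eq_supported_on
    by (auto simp: tail_zero_def supported_on_def)
  moreover have "X1 \<inter> X2 = {}" unfolding X1_def X2_def by (auto simp: supported_on_def)
  moreover have "finite X1" "finite X2"
    unfolding X1_def X2_def by (auto intro: finite_subset[OF _ finite_supported_on])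
  moreover have "card X1 = ?q ^ 5 - ?q ^ 4"
  proof -
    have F: "Q 2 w = Q 2 (w(3 := 0)) + w 3 * w 4" for w unfolding Q_plane23 by (simp add: algebra_simps)
    have "card X1 = card {w \<in> supported_on {1,2,4,5,6}. w 4 \<noteq> (0::'a)}"
      unfolding X1_def by (rule card_solve_coordinate[OF _ _ F]) auto
    also have "\<dots> = ?q ^ 5 - ?q ^ 4" by (subst card_supported_on_nonzero) (auto simp: eval_nat_numeral)
    finally show ?thesis .
  qed
  moreover have "card X2 = ?q ^ 4 - ?q ^ 3"
  proof -
    have F: "Q 2 w = Q 2 (w(2 := 0)) + w 2 * w 5" for w unfolding Q_plane23 by (simp add: algebra_simps)
    have "card X2 = card {w \<in> supported_on {1,3,5,6}. w 5 \<noteq> (0::'a)}"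
      unfolding X2_def by (rule card_solve_coordinate[OF _ _ F]) auto
    also have "\<dots> = ?q ^ 4 - ?q ^ 3" by (subst card_supported_on_nonzero) (auto simp: eval_nat_numeral)
    finally show ?thesis .
  qed
  moreover have "?q ^ 3 \<le> ?q ^ 4" "?q ^ 4 \<le> ?q ^ 5"
    using card_UNIV_field_ge_two[where 'a='a] by (simp_all add: power_increasing)
  ultimately show ?thesis by (simp add: card_Un_disjoint)
qed

text \<open>For \<open>n = 2\<close>, a generator containing a point \<open>w\<close> off \<open>tail_zero 2\<close> is the plane spanned by \<open>w\<close>
  and \<open>partner w\<close>, its unique point in \<open>tail_zero 2\<close> up to scalars. Double counting the pairs
  (generator, point off \<open>tail_zero 2\<close>) counts these generators.\<close>

definition partner :: "(nat \<Rightarrow> 'a) \<Rightarrow> (nat \<Rightarrow> 'a)" where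
  "partner w = (\<lambda>i. if i = 2 then w 4 else if i = 3 then w 5 else 0)"

definition plane :: "(nat \<Rightarrow> 'a) \<Rightarrow> (nat \<Rightarrow> 'a) set" where
  "plane w = adjoin w (adjoin (partner w) {0})"

lemma mem_plane_iff: "x \<in> plane w \<longleftrightarrow> (\<exists>c d. x = vscale c w + vscale d (partner w))"
  by (auto simp: plane_def mem_adjoin_iff)

lemma subspace_plane: "VS.subspace (plane w)"
  unfolding plane_def by (intro subspace_adjoin VS.subspace_single_0)

lemma partner_facts:
  "partner w \<in> supported_on {2, 3}" "partner w \<in> tail_zero 2" "Q 2 (partner w) = 0"
  "polar 2 w (partner w) = 0" "partner w \<in> coordspace 6" "Bmu 2 (partner w) y = 0" "Bmu 2 y (partner w) = 0"
proof -
  show P: "partner w \<in> supported_on {2, 3}" by (simp add: partner_def supported_on_def)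
  show "polar 2 w (partner w) = 0"
    using polar_plane23[OF P, of w] by (simp add: polar_sym partner_def mult.commute)
qed (simp_all add: partner_def tail_zero_def Q_plane23 coordspace_def Bmu_def)

lemma plane_inter_tail_zero:
  assumes "w \<notin> tail_zero 2"
  shows "plane w \<inter> tail_zero 2 = adjoin (partner w) {0}"
proof
  show "plane w \<inter> tail_zero 2 \<subseteq> adjoin (partner w) {0}"
  proof
    fix x assume x: "x \<in> plane w \<inter> tail_zero 2"
    then obtain c y where y: "y \<in> adjoin (partner w) {0}" "x = vscale c w + y"
      by (auto simp: plane_def mem_adjoin_iff)
    then have "y \<in> tail_zero 2" using partner_facts(2) by (auto simp: mem_adjoin_iff tail_zero_def vscale_apply)
    then have "c * w 4 = 0" "c * w 5 = 0" using x y(2) by (auto simp: tail_zero_def vscale_apply)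
    then have "c = 0" using assms by (auto simp: tail_zero_def)
    then show "x \<in> adjoin (partner w) {0}" using y by (simp add: VS.scale_zero_left)
  qed
  show "adjoin (partner w) {0} \<subseteq> plane w \<inter> tail_zero 2"
    using subset_adjoin[of _ w] partner_facts(2)
    by (auto simp: plane_def mem_adjoin_iff tail_zero_def vscale_apply)
qed

lemma
  assumes "w \<notin> tail_zero 2"
  shows card_plane: "card (plane w) = CARD('a) ^ 2"
    and card_plane_off_tail_zero: "card {x \<in> plane w. x \<notin> tail_zero 2} = CARD('a) ^ 2 - CARD('a)"
proof -
  have "partner w 2 \<noteq> 0 \<or> partner w 3 \<noteq> 0" using assms by (simp add: tail_zero_def partner_def)
  then have "partner w \<noteq> 0" by auto
  then have L: "card (adjoin (partner w) {0}) = CARD('a)" by (simp add: card_adjoin)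
  have "w \<notin> adjoin (partner w) {0}"
    using assms plane_inter_tail_zero[OF assms] by blast
  then show P: "card (plane w) = CARD('a) ^ 2"
    using L by (simp add: plane_def card_adjoin subspace_adjoin power2_eq_square)
  have "{x \<in> plane w. x \<notin> tail_zero 2} = plane w - adjoin (partner w) {0}"
    using plane_inter_tail_zero[OF assms] by blast
  moreover have "finite (plane w)" using P card_UNIV_field_ge_two[where 'a='a] card_gt_0_iff by force
  moreover have "adjoin (partner w) {0} \<subseteq> plane w" using plane_inter_tail_zero[OF assms] by blast
  ultimately show "card {x \<in> plane w. x \<notin> tail_zero 2} = CARD('a) ^ 2 - CARD('a)"
    using P L by (simp add: card_Diff_subset finite_subset)
qed

lemma plane_in_iso_gens:
  assumes w: "w \<in> singular_off_tail_2"
  shows "plane w \<in> iso_gens 2 False" "w \<in> plane w"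
proof -
  have wc: "w \<in> coordspace 6" "Q 2 w = 0" "w \<notin> tail_zero 2" using w by (auto simp: singular_off_tail_2_def)
  have "plane w \<subseteq> coordspace 6"
    using wc(1) partner_facts(5) unfolding plane_def
    by (intro adjoin_subset subspace_coordspace) (auto intro: VS.subspace_0[OF subspace_coordspace])
  moreover have "Q 2 x = 0" if "x \<in> plane w" for x
    using that wc(2) partner_facts(3,4) by (auto simp: mem_plane_iff Q_add Q_scale polar_scale)
  moreover have "Bmu 2 x y = 0" if "x \<in> plane w" "y \<in> plane w" for x y
    using that partner_facts(6,7) by (auto simp: mem_plane_iff Bmu_add Bmu_scale)
  ultimately show "plane w \<in> iso_gens 2 False"
    using subspace_plane card_plane[OF wc(3)]
    by (simp add: iso_gens_def singular_isotropic_def tail_def)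
  show "w \<in> plane w" unfolding plane_def by (rule mem_adjoin_self) (simp add: VS.subspace_0 subspace_adjoin)
qed

lemma multiple_of_partner:
  assumes t: "t \<in> supported_on {2, 3}" "polar 2 t w = 0" and w: "w \<notin> tail_zero 2"
  shows "t = vscale (if w 4 \<noteq> 0 then t 2 / w 4 else t 3 / w 5) (partner w)"
proof -
  have "t 2 * w 5 + t 3 * w 4 = 0" using t polar_plane23 by simp
  then have p: "t 2 * w 5 = t 3 * w 4" by (rule eq_if_add_eq_zero)
  show ?thesis
  proof
    fix i
    show "t i = vscale (if w 4 \<noteq> 0 then t 2 / w 4 else t 3 / w 5) (partner w) i"
    proof (cases "w 4 = 0")
      case True
      then have "w 5 \<noteq> 0" "t 2 = 0" using w p by (auto simp: tail_zero_def)
      then show ?thesis using True t(1) by (auto simp: supported_on_def vscale_apply partner_def)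
    next
      case False
      then have "t 3 = t 2 / w 4 * w 5" using p by (simp add: field_simps)
      then show ?thesis using False t(1) by (auto simp: supported_on_def vscale_apply partner_def)
    qed
  qed
qed

lemma iso_gens_2_eq_plane:
  assumes W: "W \<in> iso_gens 2 False" and w: "w \<in> W" "w \<notin> tail_zero 2"
  shows "W = plane w"
proof -
  have T: "singular_isotropic 2 W" and cW: "card W = CARD('a) ^ 2" using W by (auto simp: iso_gens_def)
  have sW: "VS.subspace W" using T by (simp add: singular_isotropic_def)
  have "W \<subseteq> plane w"
  proof
    fix x assume x: "x \<in> W"
    define j where "j = (if w (2*2) \<noteq> 0 then 2*2 else 2*2+1 :: nat)"
    have wj: "w j \<noteq> 0" using w(2) by (auto simp: j_def tail_zero_def)
    define t where "t = x - vscale (x j / w j) w"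
    have tW: "t \<in> W" unfolding t_def using x w(1) sW VS.subspace_diff VS.subspace_scale by blast
    moreover have "t j = 0" using wj by (simp add: t_def vscale_apply)
    ultimately have "t \<in> tail_zero 2"
      using singular_isotropic_coordinate_zero_eq[OF T w] unfolding j_def by blast
    then have "t \<in> supported_on {2, 3}"
      using singular_tail_zero_2_subset_plane23 tW T by (auto simp: singular_isotropic_def)
    then obtain d where "t = vscale d (partner w)"
      using multiple_of_partner polar_eq_zero_if_singular_isotropic[OF T tW w(1)] w(2) by blast
    then have "x = vscale (x j / w j) w + vscale d (partner w)" unfolding t_def by (simp add: algebra_simps)
    then show "x \<in> plane w" unfolding mem_plane_iff by blast
  qed
  moreover have "finite (plane w)"
    using card_plane[OF w(2)] card_UNIV_field_ge_two[where 'a='a] card_gt_0_iff by force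
  ultimately show ?thesis using card_subset_eq cW card_plane[OF w(2)] by metis
qed

lemma bij_betw_off_tail_zero_pairs:
  "bij_betw snd (SIGMA W:{W \<in> iso_gens 2 False. \<not> W \<subseteq> tail_zero 2}. {x\<in>W. x \<notin> tail_zero 2})
     singular_off_tail_2"
  (is "bij_betw snd ?P _")
proof (rule bij_betw_byWitness[where f'="\<lambda>w. (plane w, w)"])
  show "\<forall>p\<in>?P. (plane (snd p), snd p) = p"
  proof
    fix p assume "p \<in> ?P"
    then obtain W w where "p = (W, w)" "W \<in> iso_gens 2 False" "w \<in> W" "w \<notin> tail_zero 2" by blast
    then show "(plane (snd p), snd p) = p" using iso_gens_2_eq_plane[of W w] by simp
  qed
  show "snd ` ?P \<subseteq> singular_off_tail_2"
  proof
    fix w assume "w \<in> snd ` ?P"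
    then obtain W where "W \<in> iso_gens 2 False" "w \<in> W" "w \<notin> tail_zero 2" by force
    moreover from this have "w \<in> coordspace 6" "Q 2 w = 0"
      by (auto simp: iso_gens_def singular_isotropic_def)
    ultimately show "w \<in> singular_off_tail_2" by (simp add: singular_off_tail_2_def)
  qed
  show "(\<lambda>w. (plane w, w)) ` singular_off_tail_2 \<subseteq> ?P"
  proof
    fix p assume "p \<in> (\<lambda>w. (plane w, w)) ` singular_off_tail_2"
    then obtain w where w: "w \<in> singular_off_tail_2" "p = (plane w, w)" by blast
    then have "w \<notin> tail_zero 2" by (simp add: singular_off_tail_2_def)
    then show "p \<in> ?P" using plane_in_iso_gens[OF w(1)] w(2) by blast
  qed
qed simp

lemma card_iso_gens_2_off_tail_zero:
  "card {W \<in> iso_gens 2 False. \<not> W \<subseteq> tail_zero 2} = CARD('a) ^ 3 + CARD('a) ^ 2"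
proof -
  let ?G = "{W \<in> iso_gens 2 False. \<not> W \<subseteq> tail_zero 2}"
  let ?P = "Sigma ?G (\<lambda>W. {x\<in>W. x \<notin> tail_zero 2})"
  let ?q = "CARD('a)"
  have "card ?P = card singular_off_tail_2"
    using bij_betw_off_tail_zero_pairs by (rule bij_betw_same_card)
  then have "card ?P = ?q ^ 5 - ?q ^ 3" using card_singular_off_tail_2 by simp
  moreover have "card ?P = card ?G * (?q ^ 2 - ?q)"
  proof -
    have "finite ?G" using finite_iso_gens[of 2 False] by simp
    then have "card ?P = (\<Sum>W\<in>?G. card {x\<in>W. x \<notin> tail_zero 2})"
      by (rule card_SigmaI) (blast intro: finite_subset[OF _ finite_of_iso_gens])
    also have "\<dots> = (\<Sum>W\<in>?G. ?q ^ 2 - ?q)"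
    proof (rule sum.cong)
      fix W assume "W \<in> ?G"
      then obtain w where w: "W \<in> iso_gens 2 False" "w \<in> W" "w \<notin> tail_zero 2" by blast
      then have "W = plane w" by (rule iso_gens_2_eq_plane)
      then show "card {x\<in>W. x \<notin> tail_zero 2} = ?q ^ 2 - ?q"
        using card_plane_off_tail_zero[OF w(3)] by simp
    qed simp
    finally show ?thesis by simp
  qed
  moreover have "?q ^ 5 - ?q ^ 3 = (?q ^ 3 + ?q ^ 2) * (?q ^ 2 - ?q)"
    by (simp add: algebra_simps eval_nat_numeral diff_mult_distrib2)
  moreover have "?q ^ 2 - ?q > 0"
    using card_UNIV_field_ge_two[where 'a='a] by (simp add: power2_eq_square)
  ultimately show ?thesis by simp
qed

lemma iso_gens_2_tail_zero: "iso_gens 2 True = {supported_on {2, 3}}"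
proof -
  let ?P = "supported_on {2, 3} :: (nat \<Rightarrow> 'a) set"
  have P: "finite ?P" "card ?P = CARD('a) ^ 2"
    by (simp_all add: finite_supported_on card_supported_on power2_eq_square)
  have "x \<in> tail_zero 2 \<and> Q 2 x = 0 \<and> Bmu 2 x y = 0" if "x \<in> ?P" "y \<in> ?P" for x y
  proof -
    have "x 1 = 0" "x 4 = 0" "x 5 = 0" "x 6 = 0" "y 4 = 0" "y 5 = 0"
      using that by (auto simp: supported_on_def)
    then show ?thesis by (simp add: tail_zero_def Q_plane23 Bmu_def)
  qed
  then have "?P \<subseteq> tail_zero 2" "\<forall>x\<in>?P. Q 2 x = 0" "\<forall>x\<in>?P. \<forall>y\<in>?P. Bmu 2 x y = 0"
    using VS.subspace_0[OF subspace_supported_on] by blast+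
  moreover have "?P \<subseteq> coordspace 6" by (auto simp: supported_on_def coordspace_def)
  ultimately have "?P \<in> iso_gens 2 True"
    using subspace_supported_on P(2) by (simp add: iso_gens_def singular_isotropic_def tail_def)
  moreover have "W = ?P" if "W \<in> iso_gens 2 True" for W
  proof -
    have "singular_isotropic 2 W" "card W = CARD('a) ^ 2" "W \<subseteq> tail_zero 2"
      using that by (auto simp: iso_gens_def tail_def)
    then have "W \<subseteq> ?P" "card W = card ?P"
      using singular_tail_zero_2_subset_plane23 P(2) by (auto simp: singular_isotropic_def)
    then show ?thesis using card_subset_eq[OF P(1)] by blast
  qed
  ultimately show ?thesis by blast
qed

lemma card_iso_gens_2:
  "card (iso_gens 2 True) = 1" "card (iso_gens 2 False) = CARD('a) ^ 3 + CARD('a) ^ 2 + 1"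
proof -
  show "card (iso_gens 2 True) = 1" by (simp add: iso_gens_2_tail_zero)
  have "iso_gens 2 False = iso_gens 2 True \<union> {W \<in> iso_gens 2 False. \<not> W \<subseteq> tail_zero 2}"
    "iso_gens 2 True \<inter> {W \<in> iso_gens 2 False. \<not> W \<subseteq> tail_zero 2} = {}"
    by (auto simp: iso_gens_def tail_def)
  moreover have "card (iso_gens 2 True \<union> {W \<in> iso_gens 2 False. \<not> W \<subseteq> tail_zero 2})
      = card (iso_gens 2 True) + card {W \<in> iso_gens 2 False. \<not> W \<subseteq> tail_zero 2}"
    using calculation(2) finite_iso_gens by (intro card_Un_disjoint) auto
  ultimately have "card (iso_gens 2 False)
      = card (iso_gens 2 True) + card {W \<in> iso_gens 2 False. \<not> W \<subseteq> tail_zero 2}"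
    by simp
  then show "card (iso_gens 2 False) = CARD('a) ^ 3 + CARD('a) ^ 2 + 1"
    using card_iso_gens_2_off_tail_zero \<open>card (iso_gens 2 True) = 1\<close> by simp
qed

lemma card_iso_gens_tail_zero:
  "n \<ge> 2 \<Longrightarrow> card (iso_gens n True) = (\<Prod>j\<in>{2..<n}. CARD('a) ^ j + 1)"
proof (induction n rule: nat_induct_at_least)
  case base
  then show ?case using card_iso_gens_2 by simp
next
  case (Suc m)
  then show ?case using card_iso_gens_Suc_True[OF Suc.hyps] by (simp add: prod.atLeastLessThan_Suc)
qed

lemma card_iso_gens_all:
  "n \<ge> 2 \<Longrightarrow> card (iso_gens n False)
     = (CARD('a) ^ (n+1) + CARD('a) ^ n + 1) * (\<Prod>j\<in>{2..<n}. CARD('a) ^ j + 1)"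
proof (induction n rule: nat_induct_at_least)
  case base
  then show ?case using card_iso_gens_2 by simp
next
  case (Suc m)
  let ?q = "CARD('a)" and ?P = "\<Prod>j\<in>{2..<m}. CARD('a) ^ j + 1"
  have "(?q ^ (m+1) + 1) * (?q ^ (m+1) + ?q ^ m + 1) + ?q ^ (m+2)
      = (?q ^ (m+2) + ?q ^ (m+1) + 1) * (?q ^ m + 1) + ?q ^ (m+1)"
    by (simp add: algebra_simps)
  then have "card (iso_gens (Suc m) False) + ?q ^ (m+1) * ?P
      = (?q ^ (m+2) + ?q ^ (m+1) + 1) * (?q ^ m + 1) * ?P + ?q ^ (m+1) * ?P"
    using card_iso_gens_Suc_False[OF Suc.hyps] Suc.IH card_iso_gens_tail_zero[OF Suc.hyps]
    by (metis (no_types, lifting) add_mult_distrib mult.assoc)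
  then have "card (iso_gens (Suc m) False) = (?q ^ (m+2) + ?q ^ (m+1) + 1) * (?q ^ m + 1) * ?P"
    by (rule add_right_imp_eq)
  moreover have "(\<Prod>j\<in>{2..<Suc m}. ?q ^ j + 1) = (?q ^ m + 1) * ?P"
    using Suc.hyps by (simp add: prod.atLeastLessThan_Suc mult.commute)
  ultimately show ?case by (simp only: Suc_eq_plus1 add.assoc one_add_one mult.assoc)
qed

end

theorem mainTheorem9:
  fixes \<delta> \<mu> :: "'a::{field,finite}" and n :: nat
  assumes "even (card (UNIV::'a set))"
    and "n \<ge> 2"
    and "irreducible [:\<delta>, 1, 1:]"
    and "\<mu> \<noteq> 0"
  shows "card {W \<in> generators n \<delta> \<mu>. totally_isotropic_B0 n W}
     = (card (UNIV::'a set) ^ (n+1) + card (UNIV::'a set) ^ n + 1) * (\<Prod>i=1..n-2. card (UNIV::'a set) ^ (n-i) + 1)"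
proof -
  interpret even_elliptic \<delta> \<mu>
    using one_add_one_eq_zero_if_even_card[OF assms(1)] irreducible_quadratic_no_root[OF assms(3)] assms(4)
    by unfold_locales auto
  show ?thesis
    using B0_isotropic_generators_eq_iso_gens card_iso_gens_all[OF assms(2)]
      prod_reflect_atLeastLessThan[OF assms(2), of "\<lambda>j. CARD('a) ^ j + 1"]
    by simp
qed

end
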